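(* Let $P=K\overline{K}$, $Q=L\overline{L}$ in $U_{K,L,twist}$, and $U=U_{K,L,twist}$. Then $U=PUP\oplus PUQ\oplus QUP\oplus QUQ$ (Pierce decomposition) and the following hold: (i) $\{PK^iE^jF^k\}_{i,j,k\ge0,\ j+k\text{ even}}\cup\{\overline{K}^iE^jF^k\}_{i>0,\,j,k\ge0,\ j+k\text{ even}}$ is a basis of $PUP$; (ii) $\{PK^iE^jF^k\}_{i,j,k\ge0,\ j+k\text{ odd}}\cup\{\overline{K}^iE^jF^k\}_{i>0,\,j,k\ge0,\ j+k\text{ odd}}$ is a basis of $PUQ$; (iii) $\{QL^iE^jF^k\}_{i,j,k\ge0,\ j+k\text{ odd}}\cup\{\overline{L}^iE^jF^k\}_{i>0,\,j,k\ge0,\ j+k\text{ odd}}$ is a basis of $QUP$; (iv) $\{QL^iE^jF^k\}_{i,j,k\ge0,\ j+k\text{ even}}\cup\{\overline{L}^iE^jF^k\}_{i>0,\,j,k\ge0,\ j+k\text{ even}}$ is a basis of $QUQ$. In particular, the union of these four families is a basis of $U_{K,L,twist}$.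
   Context: Fix $q\in\mathbb{C}$, $q\neq 0,\pm1$. $U_{K,L,twist}$ is the unital associative $\mathbb{C}$-algebra generated by $K,\overline{K},L,\overline{L},E,F$ subject to $K\overline{K}K=K$, $\overline{K}K\overline{K}=\overline{K}$, $K\overline{K}=\overline{K}K$, $L\overline{L}L=L$, $\overline{L}L\overline{L}=\overline{L}$, $L\overline{L}=\overline{L}L$, $K\overline{K}+L\overline{L}=\mathbf{1}$, $KE=q^2EL$, $LE=q^2EK$, $\overline{K}E=q^{-2}E\overline{L}$, $\overline{L}E=q^{-2}E\overline{K}$, $KF=q^{-2}FL$, $LF=q^{-2}FK$, $\overline{K}F=q^2F\overline{L}$, $\overline{L}F=q^2F\overline{K}$, $EF-FE=\frac{(K+L)-(\overline{K}+\overline{L})}{q-q^{-1}}$. Here $PK^0=P$, $QL^0=Q$. *)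

theory Defs
  imports Complex_Main
begin

text \<open>The free unital associative complex algebra on the six generators
  K, Kbar, L, Lbar, E, F is modelled by finitely supported functions from words
  (lists of generators) to complex numbers, with concatenation product.
  The algebra U_{K,L,twist} is its quotient by the two-sided ideal generated by
  the defining relations; statements about U are expressed modulo this ideal.\<close>

datatype gen = GK | GKb | GL | GLb | GE | GF

type_synonym fa = "gen list \<Rightarrow> complex"

definition FA :: "fa set" where
  "FA = {f. finite {w. f w \<noteq> 0}}"

definition fzero :: fa where "fzero = (\<lambda>w. 0)"
definition fone :: fa where "fone = (\<lambda>w. if w = [] then 1 else 0)"
definition fgen :: "gen \<Rightarrow> fa" where "fgen x = (\<lambda>w. if w = [x] then 1 else 0)"
definition fadd :: "fa \<Rightarrow> fa \<Rightarrow> fa" where "fadd f g = (\<lambda>w. f w + g w)"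
definition fsc :: "complex \<Rightarrow> fa \<Rightarrow> fa" where "fsc c f = (\<lambda>w. c * f w)"
definition fsub :: "fa \<Rightarrow> fa \<Rightarrow> fa" where "fsub f g = (\<lambda>w. f w - g w)"
definition fmul :: "fa \<Rightarrow> fa \<Rightarrow> fa" where
  "fmul f g = (\<lambda>w. \<Sum>i\<le>length w. f (take i w) * g (drop i w))"

primrec fpow :: "fa \<Rightarrow> nat \<Rightarrow> fa" where
  "fpow f 0 = fone"
| "fpow f (Suc n) = fmul f (fpow f n)"

definition lincomb :: "('i \<Rightarrow> complex) \<Rightarrow> ('i \<Rightarrow> fa) \<Rightarrow> 'i set \<Rightarrow> fa" where
  "lincomb c b J = (\<lambda>w. \<Sum>j\<in>J. c j * b j w)"

abbreviation "gK \<equiv> fgen GK"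
abbreviation "gKb \<equiv> fgen GKb"
abbreviation "gL \<equiv> fgen GL"
abbreviation "gLb \<equiv> fgen GLb"
abbreviation "gE \<equiv> fgen GE"
abbreviation "gF \<equiv> fgen GF"

abbreviation fmul3 :: "fa \<Rightarrow> fa \<Rightarrow> fa \<Rightarrow> fa" where "fmul3 a b c \<equiv> fmul (fmul a b) c"

definition rels :: "complex \<Rightarrow> fa set" where
  "rels q = {
     fsub (fmul3 gK gKb gK) gK,
     fsub (fmul3 gKb gK gKb) gKb,
     fsub (fmul gK gKb) (fmul gKb gK),
     fsub (fmul3 gL gLb gL) gL,
     fsub (fmul3 gLb gL gLb) gLb,
     fsub (fmul gL gLb) (fmul gLb gL),
     fsub (fadd (fmul gK gKb) (fmul gL gLb)) fone,
     fsub (fmul gK gE) (fsc (q^2) (fmul gE gL)),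
     fsub (fmul gL gE) (fsc (q^2) (fmul gE gK)),
     fsub (fmul gKb gE) (fsc (inverse (q^2)) (fmul gE gLb)),
     fsub (fmul gLb gE) (fsc (inverse (q^2)) (fmul gE gKb)),
     fsub (fmul gK gF) (fsc (inverse (q^2)) (fmul gF gL)),
     fsub (fmul gL gF) (fsc (inverse (q^2)) (fmul gF gK)),
     fsub (fmul gKb gF) (fsc (q^2) (fmul gF gLb)),
     fsub (fmul gLb gF) (fsc (q^2) (fmul gF gKb)),
     fsub (fsub (fmul gE gF) (fmul gF gE))
          (fsc (inverse (q - inverse q)) (fsub (fadd gK gL) (fadd gKb gLb)))}"

inductive_set ideal_gen :: "fa set \<Rightarrow> fa set" for R :: "fa set" where
  zero: "fzero \<in> ideal_gen R"
| gen: "r \<in> R \<Longrightarrow> a \<in> FA \<Longrightarrow> b \<in> FA \<Longrightarrow> fmul3 a r b \<in> ideal_gen R"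
| add: "x \<in> ideal_gen R \<Longrightarrow> y \<in> ideal_gen R \<Longrightarrow> fadd x y \<in> ideal_gen R"
| scale: "x \<in> ideal_gen R \<Longrightarrow> fsc c x \<in> ideal_gen R"

definition eqU :: "complex \<Rightarrow> fa \<Rightarrow> fa \<Rightarrow> bool" where
  "eqU q x y \<longleftrightarrow> fsub x y \<in> ideal_gen (rels q)"

definition inU :: "complex \<Rightarrow> fa set \<Rightarrow> fa \<Rightarrow> bool" where
  "inU q S x \<longleftrightarrow> (\<exists>s\<in>S. eqU q x s)"

definition basisU :: "complex \<Rightarrow> fa set \<Rightarrow> 'i set \<Rightarrow> ('i \<Rightarrow> fa) \<Rightarrow> bool" where
  "basisU q S J b \<longleftrightarrow>
     (\<forall>j\<in>J. b j \<in> FA \<and> inU q S (b j)) \<and>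
     (\<forall>x\<in>FA. inU q S x \<longrightarrow> (\<exists>J' c. J' \<subseteq> J \<and> finite J' \<and> eqU q x (lincomb c b J'))) \<and>
     (\<forall>J' c. J' \<subseteq> J \<and> finite J' \<and> eqU q (lincomb c b J') fzero \<longrightarrow> (\<forall>j\<in>J'. c j = 0))"

definition Pe :: fa where "Pe = fmul gK gKb"
definition Qe :: fa where "Qe = fmul gL gLb"

definition sandwich :: "fa \<Rightarrow> fa \<Rightarrow> fa set" where
  "sandwich X Y = {fmul3 X u Y | u. u \<in> FA}"

text \<open>Family indexed by (Inl (i,j,k)) = X*A^i*E^j*F^k (i \<ge> 0) and
  (Inr (i,j,k)) = Ab^i*E^j*F^k (i > 0), with parity condition on j+k.\<close>
definition fam :: "fa \<Rightarrow> fa \<Rightarrow> fa \<Rightarrow> (nat \<times> nat \<times> nat) + (nat \<times> nat \<times> nat) \<Rightarrow> fa" where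
  "fam X A Ab idx = (case idx of
      Inl (i, j, k) \<Rightarrow> fmul (fmul3 X (fpow A i) (fpow gE j)) (fpow gF k)
    | Inr (i, j, k) \<Rightarrow> fmul3 (fpow Ab i) (fpow gE j) (fpow gF k))"

definition famidx :: "bool \<Rightarrow> ((nat \<times> nat \<times> nat) + (nat \<times> nat \<times> nat)) set" where
  "famidx ev = {Inl (i, j, k) | i j k. even (j + k) = ev}
             \<union> {Inr (i, j, k) | i j k. i > 0 \<and> even (j + k) = ev}"

end

theory Submission
  imports Defs
begin

(* Write P = K Kbar, Q = L Lbar, T = K + L and Tbar = Kbar + Lbar.  The defining relations
   make P, Q complementary orthogonal idempotents commuting with T, make T invertible with
   inverse Tbar, and let E and F swap P and Q.  Hence every element of U is a linear
   combination of the "normal words" P_b T^z E^j F^k (b a sheet P or Q, z an integer,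
   j, k natural numbers); for z >= 0 this is P K^z E^j F^k resp. Q L^z E^j F^k, for z < 0
   it is Kbar^-z E^j F^k resp. Lbar^-z E^j F^k.  These words are linearly independent,
   because U acts on the space of functions of (b, z, j, k) so that the normal word
   indexed by m sends a fixed vector e0 to the indicator function of m.  Finally
   P_a (P_b T^z E^j F^k) P_c is the word itself when a = b and c is the sheet reached
   after j + k swaps, and 0 otherwise, which yields the Pierce decomposition and sorts
   the normal words into the four corners. *)

lemma fa_ext: "(\<And>w. f w = g w) \<Longrightarrow> f = (g::fa)" by auto

lemma fzero_FA[simp]: "fzero \<in> FA" by (simp add: FA_def fzero_def)
lemma fone_FA[simp]: "fone \<in> FA"
  unfolding FA_def fone_def mem_Collect_eq by (rule finite_subset[of _ "{[]}"]) auto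
lemma fgen_FA[simp]: "fgen x \<in> FA"
  unfolding FA_def fgen_def mem_Collect_eq by (rule finite_subset[of _ "{[x]}"]) auto
lemma fadd_FA[simp]: "f \<in> FA \<Longrightarrow> g \<in> FA \<Longrightarrow> fadd f g \<in> FA"
  unfolding FA_def fadd_def mem_Collect_eq
  by (rule finite_subset[of _ "{w. f w \<noteq> 0} \<union> {w. g w \<noteq> 0}"]) auto
lemma fsub_FA[simp]: "f \<in> FA \<Longrightarrow> g \<in> FA \<Longrightarrow> fsub f g \<in> FA"
  unfolding FA_def fsub_def mem_Collect_eq
  by (rule finite_subset[of _ "{w. f w \<noteq> 0} \<union> {w. g w \<noteq> 0}"]) auto
lemma fsc_FA[simp]: "f \<in> FA \<Longrightarrow> fsc c f \<in> FA"
  unfolding FA_def fsc_def mem_Collect_eq by (rule finite_subset[of _ "{w. f w \<noteq> 0}"]) auto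

lemma FA_finite_support: "x \<in> FA \<Longrightarrow> finite {w. x w \<noteq> 0}" by (simp add: FA_def)

lemma fmul_support:
  "{w. fmul f g w \<noteq> 0} \<subseteq> (\<lambda>(u,v). u @ v) ` ({w. f w \<noteq> 0} \<times> {w. g w \<noteq> 0})"
proof
  fix w assume "w \<in> {w. fmul f g w \<noteq> 0}"
  then obtain i where "i \<in> {..length w}" "f (take i w) * g (drop i w) \<noteq> 0"
    unfolding fmul_def by (auto elim: sum.not_neutral_contains_not_neutral)
  then show "w \<in> (\<lambda>(u,v). u @ v) ` ({w. f w \<noteq> 0} \<times> {w. g w \<noteq> 0})"
    by (auto intro!: image_eqI[of _ _ "(take i w, drop i w)"])
qed

lemma fmul_FA[simp]: "f \<in> FA \<Longrightarrow> g \<in> FA \<Longrightarrow> fmul f g \<in> FA"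
  unfolding FA_def mem_Collect_eq by (rule finite_subset[OF fmul_support]) auto

lemma fpow_FA[simp]: "f \<in> FA \<Longrightarrow> fpow f n \<in> FA"
  by (induct n) auto

lemma lincomb_insert:
  "j \<notin> J \<Longrightarrow> finite J \<Longrightarrow> lincomb c b (insert j J) = fadd (fsc (c j) (b j)) (lincomb c b J)"
  by (auto simp: lincomb_def fadd_def fsc_def)

lemma lincomb_empty: "lincomb c b {} = fzero"
  by (simp add: lincomb_def fzero_def)

lemma lincomb_FA[simp]: "finite J \<Longrightarrow> (\<And>j. j \<in> J \<Longrightarrow> b j \<in> FA) \<Longrightarrow> lincomb c b J \<in> FA"
  by (induct J rule: finite_induct) (simp_all add: lincomb_empty lincomb_insert)

(* Associativity: both sides sum a(u) b(v) c(w) over all factorisations uvw of a word. *)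
lemma fmul_assoc: "fmul (fmul a b) c = fmul a (fmul (b::fa) c)"
proof (rule fa_ext)
  fix w :: "gen list"
  let ?n = "length w"
  define G where "G j l = a (take j w) * b (take l (drop j w)) * c (drop (j+l) w)" for j l
  have "fmul (fmul a b) c w = (\<Sum>i\<le>?n. \<Sum>j\<le>i. G j (i - j))"
    unfolding fmul_def G_def
    by (auto simp: sum_distrib_right min_def take_drop intro!: sum.cong)
  also have "\<dots> = (\<Sum>(j,l)\<in>{(j,l). j + l \<le> ?n}. G j l)"
    by (rule sum.triangle_reindex_eq[symmetric])
  also have "{(j,l). j + l \<le> ?n} = Sigma {..?n} (\<lambda>j. {..?n - j})" by auto
  also have "(\<Sum>(j,l)\<in>Sigma {..?n} (\<lambda>j. {..?n - j}). G j l) = (\<Sum>j\<le>?n. \<Sum>l\<le>?n-j. G j l)"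
    by (rule sum.Sigma[symmetric]) auto
  also have "\<dots> = fmul a (fmul b c) w"
    unfolding fmul_def G_def
    by (auto simp: sum_distrib_left mult.assoc add.commute intro!: sum.cong)
  finally show "fmul (fmul a b) c w = fmul a (fmul b c) w" .
qed

lemma fmul_fone_left[simp]: "fmul fone x = x"
proof (rule fa_ext)
  fix w :: "gen list"
  have "fmul fone x w = (\<Sum>i\<in>{0}. fone (take i w) * x (drop i w))"
    unfolding fmul_def by (rule sum.mono_neutral_right) (auto simp: fone_def)
  then show "fmul fone x w = x w" by (simp add: fone_def)
qed

lemma fmul_fone_right[simp]: "fmul x fone = x"
proof (rule fa_ext)
  fix w :: "gen list"
  have "fmul x fone w = (\<Sum>i\<in>{length w}. x (take i w) * fone (drop i w))"
    unfolding fmul_def by (rule sum.mono_neutral_right) (auto simp: fone_def)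
  then show "fmul x fone w = x w" by (simp add: fone_def)
qed

lemma fmul_fzero_left[simp]: "fmul fzero x = fzero"
  and fmul_fzero_right[simp]: "fmul x fzero = fzero"
  by (auto simp: fmul_def fzero_def)

lemma fmul_fadd_left: "fmul (fadd a b) c = fadd (fmul a c) (fmul b c)"
  and fmul_fadd_right: "fmul c (fadd a b) = fadd (fmul c a) (fmul c b)"
  and fmul_fsub_left: "fmul (fsub a b) c = fsub (fmul a c) (fmul b c)"
  and fmul_fsub_right: "fmul c (fsub a b) = fsub (fmul c a) (fmul c b)"
  and fmul_fsc_left: "fmul (fsc k a) c = fsc k (fmul a c)"
  and fmul_fsc_right: "fmul c (fsc k a) = fsc k (fmul c a)"
  by (auto simp: fmul_def fadd_def fsub_def fsc_def algebra_simps sum.distrib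
      sum_subtractf sum_distrib_left)

lemma ideal_gen_FA: "x \<in> ideal_gen R \<Longrightarrow> R \<subseteq> FA \<Longrightarrow> x \<in> FA"
  by (induct x rule: ideal_gen.induct) auto

lemma ideal_mul_left: "x \<in> ideal_gen R \<Longrightarrow> a \<in> FA \<Longrightarrow> fmul a x \<in> ideal_gen R"
proof (induct x rule: ideal_gen.induct)
  case (gen r a' b) then show ?case by (metis fmul_FA fmul_assoc ideal_gen.gen)
qed (simp_all add: ideal_gen.zero fmul_fadd_right fmul_fsc_right ideal_gen.add ideal_gen.scale)

lemma ideal_mul_right: "x \<in> ideal_gen R \<Longrightarrow> a \<in> FA \<Longrightarrow> fmul x a \<in> ideal_gen R"
proof (induct x rule: ideal_gen.induct)
  case (gen r a' b) then show ?case by (metis fmul_FA fmul_assoc ideal_gen.gen)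
qed (simp_all add: ideal_gen.zero fmul_fadd_left fmul_fsc_left ideal_gen.add ideal_gen.scale)

lemma ideal_sub: "x \<in> ideal_gen R \<Longrightarrow> y \<in> ideal_gen R \<Longrightarrow> fsub x y \<in> ideal_gen R"
proof -
  assume "x \<in> ideal_gen R" "y \<in> ideal_gen R"
  then have "fadd x (fsc (-1) y) \<in> ideal_gen R" by (intro ideal_gen.add ideal_gen.scale)
  moreover have "fadd x (fsc (-1) y) = fsub x y" by (auto simp: fadd_def fsc_def fsub_def)
  ultimately show ?thesis by simp
qed

lemma eqU_refl[simp]: "eqU q x x"
proof -
  have "fsub x x = fzero" by (auto simp: fsub_def fzero_def)
  then show ?thesis unfolding eqU_def by (simp add: ideal_gen.zero)
qed

lemma eqU_sym: "eqU q x y \<Longrightarrow> eqU q y x"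
proof -
  assume "eqU q x y"
  then have "fsc (-1) (fsub x y) \<in> ideal_gen (rels q)" unfolding eqU_def by (rule ideal_gen.scale)
  moreover have "fsc (-1) (fsub x y) = fsub y x" by (auto simp: fsc_def fsub_def)
  ultimately show ?thesis by (simp add: eqU_def)
qed

lemma eqU_trans: "eqU q x y \<Longrightarrow> eqU q y z \<Longrightarrow> eqU q x z"
proof -
  assume "eqU q x y" "eqU q y z"
  then have "fadd (fsub x y) (fsub y z) \<in> ideal_gen (rels q)" unfolding eqU_def by (rule ideal_gen.add)
  moreover have "fadd (fsub x y) (fsub y z) = fsub x z" by (auto simp: fadd_def fsub_def)
  ultimately show ?thesis by (simp add: eqU_def)
qed

lemma eqU_add: "eqU q x y \<Longrightarrow> eqU q x' y' \<Longrightarrow> eqU q (fadd x x') (fadd y y')"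
proof -
  assume "eqU q x y" "eqU q x' y'"
  then have "fadd (fsub x y) (fsub x' y') \<in> ideal_gen (rels q)" unfolding eqU_def by (rule ideal_gen.add)
  moreover have "fadd (fsub x y) (fsub x' y') = fsub (fadd x x') (fadd y y')"
    by (auto simp: fadd_def fsub_def)
  ultimately show ?thesis unfolding eqU_def by simp
qed

lemma eqU_sub: "eqU q x y \<Longrightarrow> eqU q x' y' \<Longrightarrow> eqU q (fsub x x') (fsub y y')"
proof -
  assume "eqU q x y" "eqU q x' y'"
  then have "fsub (fsub x y) (fsub x' y') \<in> ideal_gen (rels q)" unfolding eqU_def by (rule ideal_sub)
  moreover have "fsub (fsub x y) (fsub x' y') = fsub (fsub x x') (fsub y y')"
    by (auto simp: fsub_def)
  ultimately show ?thesis unfolding eqU_def by simp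
qed

lemma eqU_sc: "eqU q x y \<Longrightarrow> eqU q (fsc c x) (fsc c y)"
proof -
  assume "eqU q x y"
  then have "fsc c (fsub x y) \<in> ideal_gen (rels q)" unfolding eqU_def by (rule ideal_gen.scale)
  moreover have "fsc c (fsub x y) = fsub (fsc c x) (fsc c y)" by (auto simp: fsc_def fsub_def algebra_simps)
  ultimately show ?thesis by (simp add: eqU_def)
qed

lemma eqU_mul:
  "eqU q x y \<Longrightarrow> eqU q x' y' \<Longrightarrow> x \<in> FA \<Longrightarrow> y' \<in> FA \<Longrightarrow> eqU q (fmul x x') (fmul y y')"
proof -
  assume a: "eqU q x y" "eqU q x' y'" "x \<in> FA" "y' \<in> FA"
  have "fmul x (fsub x' y') \<in> ideal_gen (rels q)"
    using a by (intro ideal_mul_left) (auto simp: eqU_def)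
  moreover have "fmul (fsub x y) y' \<in> ideal_gen (rels q)"
    using a by (intro ideal_mul_right) (auto simp: eqU_def)
  ultimately have "fadd (fmul x (fsub x' y')) (fmul (fsub x y) y') \<in> ideal_gen (rels q)"
    by (rule ideal_gen.add)
  moreover have "fadd (fmul x (fsub x' y')) (fmul (fsub x y) y') = fsub (fmul x x') (fmul y y')"
    by (simp only: fmul_fsub_left fmul_fsub_right) (auto simp: fadd_def fsub_def)
  ultimately show ?thesis unfolding eqU_def by simp
qed

lemma eqU_of_rel: "fsub x y \<in> rels q \<Longrightarrow> eqU q x y"
proof -
  assume "fsub x y \<in> rels q"
  then have "fmul3 fone (fsub x y) fone \<in> ideal_gen (rels q)" by (intro ideal_gen.gen) auto
  then show ?thesis by (simp add: eqU_def)
qed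

lemma rels_FA: "r \<in> rels q \<Longrightarrow> r \<in> FA"
  by (auto simp: rels_def)

section \<open>A ring containing U_q for all nonzero q at once\<close>

(* An element of gU is a family of free-algebra elements, one for each q, taken modulo the
   relations of U_q at every nonzero q.  This makes the classes of U_q available as a
   type-class ring, whose scalars are functions of q (Sc); statements at a fixed q are
   recovered by gU_eqD. *)
definition fam_rel :: "(complex \<Rightarrow> fa) \<Rightarrow> (complex \<Rightarrow> fa) \<Rightarrow> bool" where
  "fam_rel X Y \<longleftrightarrow> (\<forall>q. X q \<in> FA \<and> Y q \<in> FA \<and> (q \<noteq> 0 \<longrightarrow> eqU q (X q) (Y q)))"

lemma fam_rel_part_equivp: "part_equivp fam_rel"
proof (rule part_equivpI)
  show "\<exists>x. fam_rel x x" by (rule exI[of _ "\<lambda>q. fzero"]) (simp add: fam_rel_def)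
  show "symp fam_rel" unfolding symp_def fam_rel_def by (auto intro: eqU_sym)
  show "transp fam_rel" unfolding transp_def fam_rel_def by (blast intro: eqU_trans)
qed

quotient_type gU = "complex \<Rightarrow> fa" / partial: fam_rel
  by (rule fam_rel_part_equivp)

lemma fam_rel_eqI: "(\<And>q. X q \<in> FA) \<Longrightarrow> (\<And>q. X q = Y q) \<Longrightarrow> fam_rel X Y"
  by (simp add: fam_rel_def)

instantiation gU :: ring
begin
lift_definition zero_gU :: gU is "\<lambda>q. fzero" by (simp add: fam_rel_def)
lift_definition plus_gU :: "gU \<Rightarrow> gU \<Rightarrow> gU" is "\<lambda>X Y q. fadd (X q) (Y q)"
  by (auto simp: fam_rel_def intro: eqU_add)
lift_definition minus_gU :: "gU \<Rightarrow> gU \<Rightarrow> gU" is "\<lambda>X Y q. fsub (X q) (Y q)"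
  by (auto simp: fam_rel_def intro: eqU_sub)
lift_definition uminus_gU :: "gU \<Rightarrow> gU" is "\<lambda>X q. fsc (-1) (X q)"
  by (auto simp: fam_rel_def intro: eqU_sc)
lift_definition times_gU :: "gU \<Rightarrow> gU \<Rightarrow> gU" is "\<lambda>X Y q. fmul (X q) (Y q)"
  by (auto simp: fam_rel_def intro: eqU_mul)
instance proof
  fix a b c :: gU
  show "a + b + c = a + (b + c)"
    by transfer (rule fam_rel_eqI, simp add: fam_rel_def, simp add: fadd_def add.assoc)
  show "a + b = b + a"
    by transfer (rule fam_rel_eqI, simp add: fam_rel_def, simp add: fadd_def add.commute)
  show "0 + a = a"
    by transfer (rule fam_rel_eqI, simp add: fam_rel_def, simp add: fadd_def fzero_def)
  show "- a + a = 0"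
    by transfer (rule fam_rel_eqI, simp add: fam_rel_def, simp add: fadd_def fzero_def fsc_def)
  show "a - b = a + - b"
    by transfer (rule fam_rel_eqI, simp add: fam_rel_def, simp add: fadd_def fsub_def fsc_def)
  show "a * b * c = a * (b * c)"
    by transfer (rule fam_rel_eqI, simp add: fam_rel_def, simp add: fmul_assoc)
  show "(a + b) * c = a * c + b * c"
    by transfer (rule fam_rel_eqI, simp add: fam_rel_def, simp add: fmul_fadd_left)
  show "a * (b + c) = a * b + a * c"
    by transfer (rule fam_rel_eqI, simp add: fam_rel_def, simp add: fmul_fadd_right)
qed
end

instantiation gU :: monoid_mult
begin
lift_definition one_gU :: gU is "\<lambda>q. fone" by (simp add: fam_rel_def)
instance proof
  fix a :: gU
  show "1 * a = a" by transfer (rule fam_rel_eqI, simp add: fam_rel_def, simp)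
  show "a * 1 = a" by transfer (rule fam_rel_eqI, simp add: fam_rel_def, simp)
qed
end

lift_definition Sc :: "(complex \<Rightarrow> complex) \<Rightarrow> gU" is "\<lambda>f q. fsc (f q) fone"
  by (auto simp: fam_rel_def)
lift_definition G :: "gen \<Rightarrow> gU" is "\<lambda>g q. fgen g"
  by (auto simp: fam_rel_def)

lemma Sc_comm: "Sc f * x = x * Sc f"
  by transfer (rule fam_rel_eqI, simp add: fam_rel_def, simp add: fmul_fsc_left fmul_fsc_right)

lemma Sc_left: "x * (Sc f * y) = Sc f * (x * y)"
  by (metis Sc_comm mult.assoc)

lemma Sc_mult: "Sc f * Sc g = Sc (\<lambda>q. f q * g q)"
  by transfer (rule fam_rel_eqI, simp add: fam_rel_def, simp only: fmul_fsc_left fmul_fsc_right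
      fmul_fone_left, simp add: fsc_def algebra_simps)

lemma Sc_add: "Sc f + Sc g = Sc (\<lambda>q. f q + g q)"
  by transfer (rule fam_rel_eqI, simp add: fam_rel_def, simp add: fadd_def fsc_def algebra_simps)

lemma Sc_one: "Sc (\<lambda>q. 1) = 1"
  by transfer (rule fam_rel_eqI, simp add: fam_rel_def, simp add: fsc_def)

lemma Sc_zero: "Sc (\<lambda>q. 0) = 0"
  by transfer (rule fam_rel_eqI, simp add: fam_rel_def, simp add: fsc_def fzero_def)

lemma Sc_neg: "Sc (\<lambda>q. - f q) * x = - (Sc f * x)"
proof -
  have "Sc (\<lambda>q. - f q) + Sc f = 0" by (simp add: Sc_add Sc_zero)
  then have "Sc (\<lambda>q. - f q) = - Sc f" by (simp add: eq_neg_iff_add_eq_0)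
  then show ?thesis by simp
qed

lemma gU_eq_iff:
  "(\<And>q. X q \<in> FA) \<Longrightarrow> (\<And>q. Y q \<in> FA) \<Longrightarrow> abs_gU X = abs_gU Y \<longleftrightarrow> fam_rel X Y"
proof -
  assume "\<And>q. X q \<in> FA" "\<And>q. Y q \<in> FA"
  then have "fam_rel X X" "fam_rel Y Y" by (auto simp: fam_rel_def)
  then show ?thesis using Quotient3_rel[OF Quotient3_gU, of X Y] by blast
qed

lemma gU_eqI: "(\<And>q. X q \<in> FA) \<Longrightarrow> (\<And>q. Y q \<in> FA) \<Longrightarrow> (\<And>q. q \<noteq> 0 \<Longrightarrow> eqU q (X q) (Y q))
  \<Longrightarrow> abs_gU X = abs_gU Y"
  by (simp add: gU_eq_iff fam_rel_def)

lemma gU_eqD: "(\<And>q. X q \<in> FA) \<Longrightarrow> (\<And>q. Y q \<in> FA) \<Longrightarrow> abs_gU X = abs_gU Y \<Longrightarrow> q \<noteq> 0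
  \<Longrightarrow> eqU q (X q) (Y q)"
  by (simp add: gU_eq_iff fam_rel_def)

lemma gU_const_eqD: "x \<in> FA \<Longrightarrow> y \<in> FA \<Longrightarrow> abs_gU (\<lambda>q. x) = abs_gU (\<lambda>q. y) \<Longrightarrow> q \<noteq> 0
  \<Longrightarrow> eqU q x y"
  using gU_eqD[of "\<lambda>q. x" "\<lambda>q. y"] by simp

lemma abs_mul: "(\<And>q. X q \<in> FA) \<Longrightarrow> (\<And>q. Y q \<in> FA) \<Longrightarrow>
  abs_gU (\<lambda>q. fmul (X q) (Y q)) = abs_gU X * abs_gU Y"
  by (subst times_gU.abs_eq) (auto simp: fam_rel_def)

lemma abs_add: "(\<And>q. X q \<in> FA) \<Longrightarrow> (\<And>q. Y q \<in> FA) \<Longrightarrow>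
  abs_gU (\<lambda>q. fadd (X q) (Y q)) = abs_gU X + abs_gU Y"
  by (subst plus_gU.abs_eq) (auto simp: fam_rel_def)

lemma abs_sc: "(\<And>q. X q \<in> FA) \<Longrightarrow> abs_gU (\<lambda>q. fsc (c q) (X q)) = Sc c * abs_gU X"
proof -
  assume X: "\<And>q. X q \<in> FA"
  have "Sc c * abs_gU X = abs_gU (\<lambda>q. fmul (fsc (c q) fone) (X q))"
    unfolding Sc.abs_eq by (rule abs_mul[symmetric]) (auto simp: X)
  then show ?thesis by (simp add: fmul_fsc_left)
qed

lemma abs_fpow: "x \<in> FA \<Longrightarrow> abs_gU (\<lambda>q. fpow x n) = abs_gU (\<lambda>q. x) ^ n"
  by (induct n) (simp_all add: one_gU.abs_eq abs_mul)

lemma abs_lincomb: "finite J \<Longrightarrow> (\<And>j. j \<in> J \<Longrightarrow> b j \<in> FA) \<Longrightarrow>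
  abs_gU (\<lambda>q. lincomb (\<lambda>j. c j q) b J) = (\<Sum>j\<in>J. Sc (c j) * abs_gU (\<lambda>q. b j))"
proof (induct J rule: finite_induct)
  case empty then show ?case by (simp add: lincomb_empty zero_gU.abs_eq)
next
  case (insert x F)
  then show ?case by (simp add: lincomb_insert abs_add abs_sc)
qed

lemma Sc_cong: "(\<And>q. q \<noteq> 0 \<Longrightarrow> f q = g q) \<Longrightarrow> Sc f = Sc g"
  unfolding Sc.abs_eq by (rule gU_eqI) auto

definition "uK = G GK"
definition "uKb = G GKb"
definition "uL = G GL"
definition "uLb = G GLb"
definition "uE = G GE"
definition "uF = G GF"

definition "c2 = Sc (\<lambda>q. q^2)"
definition "ci = Sc (\<lambda>q. inverse (q^2))"
definition "cs = Sc (\<lambda>q. inverse (q - inverse q))"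

lemma defining_relations:
  shows K_Kb_K: "uK * uKb * uK = uK"
    and Kb_K_Kb: "uKb * uK * uKb = uKb"
    and K_Kb_comm: "uK * uKb = uKb * uK"
    and L_Lb_L: "uL * uLb * uL = uL"
    and Lb_L_Lb: "uLb * uL * uLb = uLb"
    and L_Lb_comm: "uL * uLb = uLb * uL"
    and KKb_LLb: "uK * uKb + uL * uLb = 1"
    and K_E: "uK * uE = c2 * (uE * uL)"
    and L_E: "uL * uE = c2 * (uE * uK)"
    and Kb_E: "uKb * uE = ci * (uE * uLb)"
    and Lb_E: "uLb * uE = ci * (uE * uKb)"
    and K_F: "uK * uF = ci * (uF * uL)"
    and L_F: "uL * uF = ci * (uF * uK)"
    and Kb_F: "uKb * uF = c2 * (uF * uLb)"
    and Lb_F: "uLb * uF = c2 * (uF * uKb)"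
    and E_F: "uE * uF - uF * uE = cs * (uK + uL - (uKb + uLb))"
  by (unfold uK_def uKb_def uL_def uLb_def uE_def uF_def c2_def ci_def cs_def; transfer;
      simp add: fam_rel_def fmul_fsc_left; intro allI impI eqU_of_rel; simp add: rels_def)+

section \<open>Consequences: the idempotents P, Q and the invertible element T\<close>

definition "uP = uK * uKb"
definition "uQ = uL * uLb"
definition "uT = uK + uL"
definition "uTb = uKb + uLb"

definition prj :: "bool \<Rightarrow> gU" where "prj b = (if b then uP else uQ)"

lemma c2_left: "x * (c2 * y) = c2 * (x * y)"
  and ci_left: "x * (ci * y) = ci * (x * y)"
  unfolding c2_def ci_def by (rule Sc_left)+

lemma absorbed_orthogonal:
  fixes x y e f :: "'a :: semiring_0"
  shows "x * e = x \<Longrightarrow> f * y = y \<Longrightarrow> e * f = 0 \<Longrightarrow> x * y = 0"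
  by (metis mult.assoc mult_zero_left mult_zero_right)

lemma P_K: "uP * uK = uK" and K_P: "uK * uP = uK"
  and Kb_P: "uKb * uP = uKb" and P_Kb: "uP * uKb = uKb"
  using K_Kb_K Kb_K_Kb K_Kb_comm by (simp_all add: uP_def mult.assoc) (metis mult.assoc)+

lemma Q_L: "uQ * uL = uL" and L_Q: "uL * uQ = uL"
  and Lb_Q: "uLb * uQ = uLb" and Q_Lb: "uQ * uLb = uLb"
  using L_Lb_L Lb_L_Lb L_Lb_comm by (simp_all add: uQ_def mult.assoc) (metis mult.assoc)+

lemma P_plus_Q: "uP + uQ = 1"
  using KKb_LLb by (simp add: uP_def uQ_def)

lemma P_idem: "uP * uP = uP" by (metis Kb_P mult.assoc uP_def)
lemma Q_idem: "uQ * uQ = uQ" by (metis Lb_Q mult.assoc uQ_def)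

lemma P_Q: "uP * uQ = 0" and Q_P: "uQ * uP = 0"
proof -
  have Q: "uQ = 1 - uP" using P_plus_Q by (metis add_diff_cancel_left')
  show "uP * uQ = 0" "uQ * uP = 0" by (simp_all add: Q algebra_simps P_idem)
qed

lemma prj_prj: "prj b * prj c = (if b = c then prj b else 0)"
  by (simp add: prj_def P_idem Q_idem P_Q Q_P)

lemma prj_sum: "prj True + prj False = 1"
  by (simp add: prj_def P_plus_Q)

lemma T_Tb: "uT * uTb = 1" and Tb_T: "uTb * uT = 1"
proof -
  have "uK * uLb = 0" by (rule absorbed_orthogonal[OF K_P Q_Lb P_Q])
  moreover have "uL * uKb = 0" by (rule absorbed_orthogonal[OF L_Q P_Kb Q_P])
  moreover have "uKb * uL = 0" by (rule absorbed_orthogonal[OF Kb_P Q_L P_Q])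
  moreover have "uLb * uK = 0" by (rule absorbed_orthogonal[OF Lb_Q P_K Q_P])
  ultimately show "uT * uTb = 1" "uTb * uT = 1"
    using KKb_LLb K_Kb_comm L_Lb_comm by (simp_all add: uT_def uTb_def algebra_simps)
qed

lemma prj_T: "prj True * uT = uK" "prj False * uT = uL"
  and prj_Tb: "prj True * uTb = uKb" "prj False * uTb = uLb"
  and T_prj: "uT * prj True = uK" "uT * prj False = uL"
  and Tb_prj: "uTb * prj True = uKb" "uTb * prj False = uLb"
proof -
  have "uP * uL = 0" by (rule absorbed_orthogonal[OF P_idem Q_L P_Q])
  moreover have "uP * uLb = 0" by (rule absorbed_orthogonal[OF P_idem Q_Lb P_Q])
  moreover have "uQ * uK = 0" by (rule absorbed_orthogonal[OF Q_idem P_K Q_P])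
  moreover have "uQ * uKb = 0" by (rule absorbed_orthogonal[OF Q_idem P_Kb Q_P])
  moreover have "uL * uP = 0" by (rule absorbed_orthogonal[OF L_Q P_idem Q_P])
  moreover have "uLb * uP = 0" by (rule absorbed_orthogonal[OF Lb_Q P_idem Q_P])
  moreover have "uK * uQ = 0" by (rule absorbed_orthogonal[OF K_P Q_idem P_Q])
  moreover have "uKb * uQ = 0" by (rule absorbed_orthogonal[OF Kb_P Q_idem P_Q])
  ultimately show "prj True * uT = uK" "prj False * uT = uL" "prj True * uTb = uKb" "prj False * uTb = uLb"
    "uT * prj True = uK" "uT * prj False = uL" "uTb * prj True = uKb" "uTb * prj False = uLb"
    by (simp_all add: prj_def uT_def uTb_def algebra_simps P_K Q_L P_Kb Q_Lb K_P L_Q Kb_P Lb_Q)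
qed

lemma prj_T_comm: "prj b * uT = uT * prj b" and prj_Tb_comm: "prj b * uTb = uTb * prj b"
  by (cases b; simp add: prj_T prj_Tb T_prj Tb_prj)+

lemma E_T: "uE * uT = ci * (uT * uE)" and E_Tb: "uE * uTb = c2 * (uTb * uE)"
  and F_T: "uF * uT = c2 * (uT * uF)" and F_Tb: "uF * uTb = ci * (uTb * uF)"
proof -
  have TE: "uT * uE = c2 * (uE * uT)" and TbE: "uTb * uE = ci * (uE * uTb)"
    and TF: "uT * uF = ci * (uF * uT)" and TbF: "uTb * uF = c2 * (uF * uTb)"
    by (simp_all add: uT_def uTb_def algebra_simps K_E L_E Kb_E Lb_E K_F L_F Kb_F Lb_F)
  have "uE * uT = uT * (uTb * uE) * uT" by (simp add: mult.assoc[symmetric] T_Tb)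
  then show "uE * uT = ci * (uT * uE)" by (simp add: TbE ci_left mult.assoc Tb_T)
  have "uE * uTb = uTb * (uT * uE) * uTb" by (simp add: mult.assoc[symmetric] Tb_T)
  then show "uE * uTb = c2 * (uTb * uE)" by (simp add: TE c2_left mult.assoc T_Tb)
  have "uF * uT = uT * (uTb * uF) * uT" by (simp add: mult.assoc[symmetric] T_Tb)
  then show "uF * uT = c2 * (uT * uF)" by (simp add: TbF c2_left mult.assoc Tb_T)
  have "uF * uTb = uTb * (uT * uF) * uTb" by (simp add: mult.assoc[symmetric] Tb_T)
  then show "uF * uTb = ci * (uTb * uF)" by (simp add: TF ci_left mult.assoc T_Tb)
qed

lemma move_past_product:
  assumes x': "x' * e = Sc f * (e * y')" and x: "x * e = Sc g * (e * y)"
    and inv: "\<And>q. q \<noteq> 0 \<Longrightarrow> f q * g q = 1"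
  shows "x * x' * e = e * (y * y')"
proof -
  have "x * x' * e = x * (Sc f * (e * y'))" by (simp only: mult.assoc x')
  also have "\<dots> = Sc f * ((x * e) * y')" by (simp only: Sc_left mult.assoc)
  also have "\<dots> = Sc f * (Sc g * (e * (y * y')))" by (simp only: x mult.assoc)
  also have "\<dots> = (Sc f * Sc g) * (e * (y * y'))" by (simp only: mult.assoc)
  also have "Sc f * Sc g = 1"
    unfolding Sc_mult Sc_one[symmetric] by (rule Sc_cong) (erule inv)
  finally show ?thesis by simp
qed

lemma E_prj: "uE * prj b = prj (\<not> b) * uE" and F_prj: "uF * prj b = prj (\<not> b) * uF"
proof -
  have "uP * uE = uE * uQ" unfolding uP_def uQ_def
    by (rule move_past_product[OF Kb_E[unfolded ci_def] K_E[unfolded c2_def]]) simp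
  moreover have "uQ * uE = uE * uP" unfolding uP_def uQ_def
    by (rule move_past_product[OF Lb_E[unfolded ci_def] L_E[unfolded c2_def]]) simp
  moreover have "uP * uF = uF * uQ" unfolding uP_def uQ_def
    by (rule move_past_product[OF Kb_F[unfolded c2_def] K_F[unfolded ci_def]]) simp
  moreover have "uQ * uF = uF * uP" unfolding uP_def uQ_def
    by (rule move_past_product[OF Lb_F[unfolded c2_def] L_F[unfolded ci_def]]) simp
  ultimately show "uE * prj b = prj (\<not> b) * uE" "uF * prj b = prj (\<not> b) * uF"
    by (simp_all add: prj_def)
qed

lemma F_E: "uF * uE = uE * uF + Sc (\<lambda>q. - inverse (q - inverse q)) * uT
    + Sc (\<lambda>q. inverse (q - inverse q)) * uTb"
proof -
  have "uF * uE = uE * uF - cs * uT + cs * uTb"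
    using E_F by (simp add: uT_def uTb_def algebra_simps)
  then show ?thesis by (simp add: cs_def Sc_neg)
qed

section \<open>Spanning by normal words\<close>

inductive_set ScSpan :: "('i \<Rightarrow> gU) \<Rightarrow> gU set" for b where
  ss_zero: "0 \<in> ScSpan b"
| ss_step: "x \<in> ScSpan b \<Longrightarrow> Sc f * b i + x \<in> ScSpan b"

lemma ss_add: "x \<in> ScSpan b \<Longrightarrow> y \<in> ScSpan b \<Longrightarrow> x + y \<in> ScSpan b"
  by (induct x rule: ScSpan.induct) (auto simp: add.assoc intro: ss_step)

lemma ss_sc: "x \<in> ScSpan b \<Longrightarrow> Sc g * x \<in> ScSpan b"
proof (induct x rule: ScSpan.induct)
  case (ss_step x f i)
  have "Sc g * (Sc f * b i + x) = Sc (\<lambda>q. g q * f q) * b i + Sc g * x"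
    by (simp add: distrib_left mult.assoc[symmetric] Sc_mult)
  then show ?case using ss_step by (auto intro: ScSpan.ss_step)
qed (simp add: ss_zero)

lemma ss_base: "b i \<in> ScSpan b"
  using ss_step[OF ss_zero, of "\<lambda>q. 1" b i] by (simp add: Sc_one)

lemma ss_left: "x \<in> ScSpan b \<Longrightarrow> (\<And>i. y * b i \<in> ScSpan b') \<Longrightarrow> y * x \<in> ScSpan b'"
proof (induct x rule: ScSpan.induct)
  case (ss_step x f i)
  have "y * (Sc f * b i + x) = Sc f * (y * b i) + y * x" by (simp add: distrib_left Sc_left)
  then show ?case using ss_step by (auto intro: ss_add ss_sc)
qed (simp add: ss_zero)

lemma ss_finite_sum: "y \<in> ScSpan b \<Longrightarrow> \<exists>S c. finite S \<and> y = (\<Sum>i\<in>S. Sc (c i) * b i)"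
proof (induct y rule: ScSpan.induct)
  case ss_zero
  show ?case by (rule exI[of _ "{}"]) simp
next
  case (ss_step x f i)
  then obtain S c where S: "finite S" "x = (\<Sum>i\<in>S. Sc (c i) * b i)" by blast
  define c' where "c' = c(i := (\<lambda>q. f q + (if i \<in> S then c i q else 0)))"
  have "(\<Sum>j\<in>insert i S. Sc (c' j) * b j) = Sc (c' i) * b i + (\<Sum>j\<in>S - {i}. Sc (c j) * b j)"
    using S(1) by (simp add: sum.insert_remove c'_def)
  also have "\<dots> = Sc f * b i + x"
  proof (cases "i \<in> S")
    case True
    then show ?thesis using S
      by (simp add: c'_def sum.remove Sc_add[symmetric] distrib_right add.assoc)
  next
    case False
    then show ?thesis using S by (simp add: c'_def Sc_zero)
  qed
  finally show ?case using S(1) by (metis finite_insert)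
qed

lemma scalar_comm_power_right: "a * b = Sc g * (b * a) \<Longrightarrow> \<exists>f. a * b^n = Sc f * (b^n * a)"
proof (induct n)
  case 0 show ?case by (rule exI[of _ "\<lambda>q. 1"]) (simp add: Sc_one)
next
  case (Suc n)
  then obtain f where f: "a * b^n = Sc f * (b^n * a)" by blast
  have "a * b^Suc n = (a * b) * b^n" by (simp only: power_Suc mult.assoc)
  also have "\<dots> = Sc g * (b * (a * b^n))" by (simp only: Suc.prems mult.assoc)
  also have "\<dots> = Sc g * (Sc f * (b * (b^n * a)))" by (simp only: f Sc_left[of b])
  also have "\<dots> = Sc (\<lambda>q. g q * f q) * (b^Suc n * a)"
    by (simp only: power_Suc mult.assoc[symmetric] Sc_mult)
  finally show ?case by blast
qed

lemma scalar_comm_power_left: "a * b = Sc g * (b * a) \<Longrightarrow> \<exists>f. a^n * b = Sc f * (b * a^n)"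
proof (induct n)
  case 0 show ?case by (rule exI[of _ "\<lambda>q. 1"]) (simp add: Sc_one)
next
  case (Suc n)
  then obtain f where f: "a^n * b = Sc f * (b * a^n)" by blast
  have "a^Suc n * b = a * (Sc f * (b * a^n))" by (simp only: power_Suc mult.assoc f)
  also have "\<dots> = Sc f * ((a * b) * a^n)" by (simp only: Sc_left mult.assoc)
  also have "\<dots> = Sc f * (Sc g * (b * a) * a^n)" by (simp only: Suc.prems)
  also have "\<dots> = Sc (\<lambda>q. f q * g q) * (b * a^Suc n)"
    by (simp only: power_Suc mult.assoc[symmetric] Sc_mult)
  finally show ?case by blast
qed

definition Tpow :: "int \<Rightarrow> gU" where
  "Tpow z = (if 0 \<le> z then uT ^ nat z else uTb ^ nat (- z))"

lemma Tpow_0: "Tpow 0 = 1" by (simp add: Tpow_def)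

lemma T_Tpow: "uT * Tpow z = Tpow (z + 1)"
proof (cases "0 \<le> z")
  case True
  then have "nat (z + 1) = Suc (nat z)" by simp
  then show ?thesis using True by (simp add: Tpow_def)
next
  case False
  then obtain n where n: "nat (- z) = Suc n" by (cases "nat (-z)") auto
  then have z: "z = - int (Suc n)" using False by linarith
  have "uT * uTb ^ Suc n = uTb ^ n" by (simp add: mult.assoc[symmetric] T_Tb)
  moreover have "Tpow (z + 1) = uTb ^ n" using z by (auto simp: Tpow_def)
  ultimately show ?thesis using False n by (simp add: Tpow_def)
qed

lemma Tb_Tpow: "uTb * Tpow z = Tpow (z - 1)"
proof (cases "0 < z")
  case True
  then obtain n where n: "nat z = Suc n" by (cases "nat z") auto
  then have z: "z = int (Suc n)" using True by linarith
  have "uTb * uT ^ Suc n = uT ^ n" by (simp add: mult.assoc[symmetric] Tb_T)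
  moreover have "Tpow (z - 1) = uT ^ n" using z by (auto simp: Tpow_def)
  ultimately show ?thesis using True n by (simp add: Tpow_def)
next
  case False
  then have "nat (- (z - 1)) = Suc (nat (-z))" by simp
  then show ?thesis using False by (simp add: Tpow_def)
qed

lemma commute_Tpow: "x * uT = uT * x \<Longrightarrow> x * uTb = uTb * x \<Longrightarrow> x * Tpow z = Tpow z * x"
  by (simp add: Tpow_def power_commuting_commutes)

lemma Tpow_T: "Tpow z * (uT * x) = Tpow (z + 1) * x"
  and Tpow_Tb: "Tpow z * (uTb * x) = Tpow (z - 1) * x"
proof -
  have "uT * uTb = uTb * uT" by (simp add: T_Tb Tb_T)
  then show "Tpow z * (uT * x) = Tpow (z + 1) * x" "Tpow z * (uTb * x) = Tpow (z - 1) * x"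
    using commute_Tpow[of uT z] commute_Tpow[of uTb z]
    by (simp_all add: mult.assoc[symmetric] T_Tpow Tb_Tpow)
qed

lemma prj_Tpow: "prj b * Tpow z = Tpow z * prj b"
  by (rule commute_Tpow[OF prj_T_comm prj_Tb_comm])

lemma E_Tpow: "\<exists>f. uE * Tpow z = Sc f * (Tpow z * uE)"
  and F_Tpow: "\<exists>f. uF * Tpow z = Sc f * (Tpow z * uF)"
  using E_T[unfolded ci_def] E_Tb[unfolded c2_def] F_T[unfolded c2_def] F_Tb[unfolded ci_def]
  by (auto simp: Tpow_def intro: scalar_comm_power_right)

lemma F_Epow: "\<exists>\<alpha> \<beta>. uF * uE^Suc j = uE^Suc j * uF + Sc \<alpha> * (uT * uE^j) + Sc \<beta> * (uTb * uE^j)"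
proof (induct j)
  case 0
  show ?case using F_E by auto
next
  case (Suc j)
  then obtain \<alpha> \<beta> where IH:
    "uF * uE^Suc j = uE^Suc j * uF + Sc \<alpha> * (uT * uE^j) + Sc \<beta> * (uTb * uE^j)" by blast
  obtain f1 where f1: "uE^Suc j * uT = Sc f1 * (uT * uE^Suc j)"
    using scalar_comm_power_left[OF E_T[unfolded ci_def]] by blast
  obtain f2 where f2: "uE^Suc j * uTb = Sc f2 * (uTb * uE^Suc j)"
    using scalar_comm_power_left[OF E_Tb[unfolded c2_def]] by blast
  define c where "c q = inverse (q - inverse q)" for q :: complex
  have "uF * uE^Suc (Suc j) = (uF * uE^Suc j) * uE"
    by (simp only: power_Suc2[of uE "Suc j"] mult.assoc)
  also have "\<dots> = uE^Suc j * (uF * uE) + Sc \<alpha> * (uT * uE^Suc j) + Sc \<beta> * (uTb * uE^Suc j)"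
    by (simp only: IH distrib_right mult.assoc power_Suc2[symmetric])
  also have "uE^Suc j * (uF * uE) = uE^Suc (Suc j) * uF
      + Sc (\<lambda>q. - c q) * (Sc f1 * (uT * uE^Suc j)) + Sc c * (Sc f2 * (uTb * uE^Suc j))"
    unfolding F_E c_def[symmetric] distrib_left Sc_left f1[symmetric] f2[symmetric]
    by (simp only: mult.assoc[symmetric] power_Suc2[symmetric])
  finally have "uF * uE^Suc (Suc j) = uE^Suc (Suc j) * uF
      + Sc (\<lambda>q. - c q * f1 q + \<alpha> q) * (uT * uE^Suc j) + Sc (\<lambda>q. c q * f2 q + \<beta> q) * (uTb * uE^Suc j)"
    by (simp only: Sc_add[symmetric] Sc_mult[symmetric] distrib_right mult.assoc add.assoc)
      (simp add: algebra_simps)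
  then show ?case by blast
qed

type_synonym idx = "bool \<times> int \<times> nat \<times> nat"

definition W :: "idx \<Rightarrow> gU" where
  "W m = (case m of (b, z, j, k) \<Rightarrow> prj b * Tpow z * uE^j * uF^k)"

abbreviation "Span \<equiv> ScSpan W"

lemma W_def': "W (b, z, j, k) = prj b * (Tpow z * (uE^j * uF^k))"
  by (simp add: W_def mult.assoc)

lemma prj_W: "prj c * W m = (if fst m = c then W m else 0)"
  by (cases m) (auto simp: W_def mult.assoc[symmetric] prj_prj)

lemma T_W: "uT * W (b, z, j, k) = W (b, z + 1, j, k)"
  and Tb_W: "uTb * W (b, z, j, k) = W (b, z - 1, j, k)"
  by (simp_all add: W_def' mult.assoc[symmetric] prj_T_comm[symmetric] prj_Tb_comm[symmetric])
    (simp_all add: mult.assoc T_Tpow Tb_Tpow)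

lemma E_W: "uE * W (b, z, j, k) \<in> Span"
proof -
  obtain f where f: "uE * Tpow z = Sc f * (Tpow z * uE)" using E_Tpow by blast
  have "uE * W (b, z, j, k) = prj (\<not> b) * ((uE * Tpow z) * (uE^j * uF^k))"
    by (simp add: W_def' mult.assoc[symmetric] E_prj)
  also have "\<dots> = Sc f * W (\<not> b, z, Suc j, k)"
    by (simp add: f W_def' mult.assoc Sc_left)
  finally show ?thesis by (simp add: ss_sc ss_base)
qed

lemma F_W: "uF * W (b, z, j, k) \<in> Span"
proof -
  obtain f where f: "uF * Tpow z = Sc f * (Tpow z * uF)" using F_Tpow by blast
  have "uF * W (b, z, j, k) = prj (\<not> b) * ((uF * Tpow z) * (uE^j * uF^k))"
    by (simp add: W_def' mult.assoc[symmetric] F_prj)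
  also have "\<dots> = Sc f * (prj (\<not> b) * (Tpow z * ((uF * uE^j) * uF^k)))"
    by (simp add: f mult.assoc Sc_left)
  finally have eq: "uF * W (b, z, j, k) = Sc f * (prj (\<not> b) * (Tpow z * ((uF * uE^j) * uF^k)))" .
  have "prj (\<not> b) * (Tpow z * ((uF * uE^j) * uF^k)) \<in> Span"
  proof (cases j)
    case 0
    then show ?thesis using ss_base[of W "(\<not> b, z, 0, Suc k)"] by (simp add: W_def' mult.assoc)
  next
    case (Suc i)
    obtain \<alpha> \<beta> where FE: "uF * uE^Suc i = uE^Suc i * uF + Sc \<alpha> * (uT * uE^i) + Sc \<beta> * (uTb * uE^i)"
      using F_Epow by blast
    have "(uF * uE^j) * uF^k
        = uE^Suc i * uF^Suc k + Sc \<alpha> * (uT * (uE^i * uF^k)) + Sc \<beta> * (uTb * (uE^i * uF^k))"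
      unfolding Suc FE by (simp only: distrib_right mult.assoc power_Suc)
    then have "prj (\<not> b) * (Tpow z * ((uF * uE^j) * uF^k))
        = W (\<not> b, z, Suc i, Suc k) + Sc \<alpha> * W (\<not> b, z + 1, i, k) + Sc \<beta> * W (\<not> b, z - 1, i, k)"
      by (simp only: W_def' distrib_left Sc_left Tpow_T Tpow_Tb)
    then show ?thesis by (auto intro!: ss_add ss_sc ss_base simp del: power_Suc)
  qed
  then show ?thesis unfolding eq by (rule ss_sc)
qed

(* The span of the normal words is a left ideal containing 1, hence everything. *)
lemma G_Span: "x \<in> Span \<Longrightarrow> G g * x \<in> Span"
proof -
  assume x: "x \<in> Span"
  have closed: "y \<in> Span \<Longrightarrow> a * y \<in> Span" if "a \<in> {prj True, prj False, uT, uTb, uE, uF}" for a y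
    by (rule ss_left, assumption) (use that in \<open>cases rule: prod_cases4,
        auto simp: prj_W T_W Tb_W E_W F_W ss_base ss_zero\<close>)
  have "G GK = prj True * uT" "G GKb = prj True * uTb" "G GL = prj False * uT"
    "G GLb = prj False * uTb" "G GE = uE" "G GF = uF"
    by (simp_all add: prj_T prj_Tb uK_def uKb_def uL_def uLb_def uE_def uF_def)
  then show ?thesis using x by (cases g) (simp_all add: mult.assoc closed)
qed

lemma one_Span: "1 \<in> Span"
proof -
  have "1 = W (True, 0, 0, 0) + W (False, 0, 0, 0)"
    by (simp add: W_def Tpow_0 prj_sum)
  then show ?thesis by (metis ss_add ss_base)
qed


(* The indicator of a single word is the product of its letters, so every element of the
   free algebra (a finite combination of such indicators) lies in the span. *)
definition dw :: "gen list \<Rightarrow> fa" where "dw w = (\<lambda>v. if v = w then 1 else 0)"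

lemma dw_FA[simp]: "dw w \<in> FA"
  unfolding FA_def dw_def mem_Collect_eq by (rule finite_subset[of _ "{w}"]) auto

lemma dw_cons: "fmul (fgen g) (dw w) = dw (g # w)"
proof (rule fa_ext)
  fix v :: "gen list"
  have "fmul (fgen g) (dw w) v = (\<Sum>i\<le>length v. if i = 1 then fgen g (take 1 v) * dw w (drop 1 v) else 0)"
    unfolding fmul_def
    by (rule sum.cong) (auto simp: fgen_def dest: arg_cong[of _ _ length])
  also have "\<dots> = dw (g # w) v" by (cases v) (auto simp: fgen_def dw_def Suc_le_eq)
  finally show "fmul (fgen g) (dw w) v = dw (g # w) v" .
qed

lemma dw_Span: "abs_gU (\<lambda>q. dw w) \<in> Span"
proof (induct w)
  case Nil
  have "dw [] = fone" by (simp add: dw_def fone_def)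
  then show ?case by (simp add: one_gU.abs_eq[symmetric] one_Span)
next
  case (Cons g w)
  have "abs_gU (\<lambda>q. dw (g # w)) = G g * abs_gU (\<lambda>q. dw w)"
    unfolding dw_cons[symmetric] by (subst abs_mul) (auto simp: G.abs_eq)
  then show ?case using Cons by (simp add: G_Span)
qed

lemma FA_decomp: "x \<in> FA \<Longrightarrow> lincomb x dw {w. x w \<noteq> 0} = x"
  by (rule fa_ext) (auto simp: lincomb_def dw_def FA_finite_support if_distrib cong: if_cong)

lemma FA_normal_form:
  assumes x: "x \<in> FA"
  shows "\<exists>S c. finite S \<and> abs_gU (\<lambda>q. x) = (\<Sum>m\<in>S. Sc (c m) * W m)"
proof -
  let ?S = "{w. x w \<noteq> 0}"
  have "abs_gU (\<lambda>q. x) = abs_gU (\<lambda>q. lincomb (\<lambda>w. (\<lambda>q. x w) q) dw ?S)"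
    using FA_decomp[OF x] by simp
  also have "\<dots> = (\<Sum>w\<in>?S. Sc (\<lambda>q. x w) * abs_gU (\<lambda>q. dw w))"
    using FA_finite_support[OF x] by (simp add: abs_lincomb)
  moreover have "(\<Sum>w\<in>S. Sc (c w) * abs_gU (\<lambda>q. dw w)) \<in> Span" if "finite S" for S c
    using that by (induct S rule: finite_induct) (auto intro: ss_add ss_sc dw_Span ss_zero)
  ultimately have "abs_gU (\<lambda>q. x) \<in> Span" using FA_finite_support[OF x] by simp
  then show ?thesis by (rule ss_finite_sum)
qed

lemma idempotent_commuting_power:
  fixes e t :: "'a :: monoid_mult"
  assumes idem: "e * e = e" and comm: "e * t = t * e"
  shows "0 < n \<Longrightarrow> (e * t) ^ n = e * t ^ n" and "e * (e * t) ^ n = e * t ^ n"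
proof -
  have suc: "(e * t) ^ Suc n = e * t ^ Suc n" for n
  proof (induct n)
    case (Suc n)
    have "(e * t) ^ Suc (Suc n) = e * t * (e * t ^ Suc n)" by (simp only: power_Suc[of _ "Suc n"] Suc)
    also have "\<dots> = (e * e) * (t * t ^ Suc n)" by (metis comm mult.assoc)
    also have "\<dots> = e * t ^ Suc (Suc n)" by (simp add: idem)
    finally show ?case .
  qed simp
  show "0 < n \<Longrightarrow> (e * t) ^ n = e * t ^ n" using suc[of "n - 1"] by simp
  show "e * (e * t) ^ n = e * t ^ n"
    by (cases n) (simp_all only: suc mult.assoc[symmetric] idem power_0)
qed

definition fam_of :: "bool \<Rightarrow> (nat \<times> nat \<times> nat) + (nat \<times> nat \<times> nat) \<Rightarrow> fa" where
  "fam_of b = (if b then fam Pe gK gKb else fam Qe gL gLb)"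

definition nword :: "idx \<Rightarrow> fa" where
  "nword m = (case m of (b, z, j, k) \<Rightarrow>
     fam_of b (if 0 \<le> z then Inl (nat z, j, k) else Inr (nat (-z), j, k)))"

lemma Pe_FA[simp]: "Pe \<in> FA" and Qe_FA[simp]: "Qe \<in> FA" by (simp_all add: Pe_def Qe_def)

lemma fam_FA[simp]: "X \<in> FA \<Longrightarrow> A \<in> FA \<Longrightarrow> Ab \<in> FA \<Longrightarrow> fam X A Ab x \<in> FA"
  by (auto simp: fam_def split: sum.split prod.split)

lemma fam_of_FA[simp]: "fam_of b x \<in> FA"
  by (simp add: fam_of_def)

lemma nword_FA[simp]: "nword m \<in> FA"
  by (simp add: nword_def split: prod.split)

lemma abs_const_mul: "x \<in> FA \<Longrightarrow> y \<in> FA \<Longrightarrow>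
  abs_gU (\<lambda>q. fmul x y) = abs_gU (\<lambda>q. x) * abs_gU (\<lambda>q. y)"
  by (rule abs_mul)

lemma abs_gens: "abs_gU (\<lambda>q. gK) = prj True * uT" "abs_gU (\<lambda>q. gKb) = prj True * uTb"
  "abs_gU (\<lambda>q. gL) = prj False * uT" "abs_gU (\<lambda>q. gLb) = prj False * uTb"
  "abs_gU (\<lambda>q. gE) = uE" "abs_gU (\<lambda>q. gF) = uF"
  by (simp_all add: prj_T prj_Tb uK_def uKb_def uL_def uLb_def uE_def uF_def G.abs_eq)

lemma abs_Pe: "abs_gU (\<lambda>q. Pe) = prj True" and abs_Qe: "abs_gU (\<lambda>q. Qe) = prj False"
  by (simp_all add: Pe_def Qe_def prj_def uP_def uQ_def abs_const_mul G.abs_eq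
      uK_def uKb_def uL_def uLb_def)

lemma prj_idem: "prj b * prj b = prj b" by (simp add: prj_prj)

lemma abs_fam_of: "abs_gU (\<lambda>q. fam_of b (Inl (i, j, k))) = W (b, int i, j, k)"
  and abs_fam_of_neg: "0 < i \<Longrightarrow> abs_gU (\<lambda>q. fam_of b (Inr (i, j, k))) = W (b, - int i, j, k)"
  using idempotent_commuting_power[OF prj_idem prj_T_comm]
    idempotent_commuting_power[OF prj_idem prj_Tb_comm]
  by (cases b; simp add: fam_of_def fam_def abs_const_mul abs_fpow abs_gens abs_Pe abs_Qe
      W_def Tpow_def)+

lemma abs_nword: "abs_gU (\<lambda>q. nword m) = W m"
  by (cases m) (simp add: nword_def abs_fam_of abs_fam_of_neg)

section \<open>A representation separating the normal words\<close>

(* U_q acts on functions of (b, z, j, k): K, Kbar, L, Lbar shift z on one sheet, E raises j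
   and switches the sheet, and F raises k, corrected by terms that realise EF - FE.  The
   constants alpha and beta are the q-integers needed for the commutator relation. *)
type_synonym vec = "idx \<Rightarrow> complex"

definition sq :: "complex \<Rightarrow> complex" where "sq q = inverse (q - inverse q)"
definition alpha :: "complex \<Rightarrow> nat \<Rightarrow> complex" where
  "alpha q j = sq q * (\<Sum>a<j. q powi (- 2 * int a))"
definition beta :: "complex \<Rightarrow> nat \<Rightarrow> complex" where
  "beta q j = sq q * (\<Sum>a<j. q powi (2 * int a))"

definition pz :: "complex \<Rightarrow> int \<Rightarrow> complex" where "pz q z = q powi (2 * z)"

definition shift :: "bool \<Rightarrow> int \<Rightarrow> vec \<Rightarrow> vec" where
  "shift s d v = (\<lambda>(b, z, j, k). if b = s then v (b, z - d, j, k) else 0)"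

fun opg :: "complex \<Rightarrow> gen \<Rightarrow> vec \<Rightarrow> vec" where
  "opg q GK v = shift True 1 v"
| "opg q GKb v = shift True (-1) v"
| "opg q GL v = shift False 1 v"
| "opg q GLb v = shift False (-1) v"
| "opg q GE v = (\<lambda>(b, z, j, k). if j = 0 then 0 else inverse (pz q z) * v (\<not> b, z, j - 1, k))"
| "opg q GF v = (\<lambda>(b, z, j, k). (if k = 0 then 0 else pz q z * v (\<not> b, z, j, k - 1))
     - pz q (z - 1) * alpha q (Suc j) * v (\<not> b, z - 1, Suc j, k)
     + pz q (z + 1) * beta q (Suc j) * v (\<not> b, z + 1, Suc j, k))"

lemma opg_sum: "opg q g (\<lambda>m. \<Sum>i\<in>I. c i * f i m) = (\<lambda>m. \<Sum>i\<in>I. c i * opg q g (f i) m)"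
  by (cases g) (simp_all add: shift_def fun_eq_iff split_def sum_distrib_left sum_subtractf
      sum.distrib distrib_left right_diff_distrib mult.left_commute)

primrec act :: "complex \<Rightarrow> gen list \<Rightarrow> vec \<Rightarrow> vec" where
  "act q [] v = v"
| "act q (g # w) v = opg q g (act q w v)"

lemma act_sum: "act q w (\<lambda>m. \<Sum>i\<in>I. c i * f i m) = (\<lambda>m. \<Sum>i\<in>I. c i * act q w (f i) m)"
  by (induct w) (simp_all add: opg_sum)

lemma act_append: "act q (u @ w) v = act q u (act q w v)"
  by (induct u) auto

definition Op :: "complex \<Rightarrow> fa \<Rightarrow> vec \<Rightarrow> vec" where
  "Op q x v = (\<lambda>m. \<Sum>w\<in>{w. x w \<noteq> 0}. x w * act q w v m)"

lemma Op_superset: "finite S \<Longrightarrow> {w. x w \<noteq> 0} \<subseteq> S \<Longrightarrow> Op q x v = (\<lambda>m. \<Sum>w\<in>S. x w * act q w v m)"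
  unfolding Op_def by (auto simp: fun_eq_iff intro!: sum.mono_neutral_left)

lemma Op_fadd: "x \<in> FA \<Longrightarrow> y \<in> FA \<Longrightarrow> Op q (fadd x y) v = (\<lambda>m. Op q x v m + Op q y v m)"
  and Op_fsub: "x \<in> FA \<Longrightarrow> y \<in> FA \<Longrightarrow> Op q (fsub x y) v = (\<lambda>m. Op q x v m - Op q y v m)"
proof -
  assume x: "x \<in> FA" and y: "y \<in> FA"
  let ?S = "{w. x w \<noteq> 0} \<union> {w. y w \<noteq> 0}"
  have fin: "finite ?S" using x y by (simp add: FA_finite_support)
  have "Op q x v = (\<lambda>m. \<Sum>w\<in>?S. x w * act q w v m)" "Op q y v = (\<lambda>m. \<Sum>w\<in>?S. y w * act q w v m)"
    by (rule Op_superset[OF fin], blast)+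
  moreover have "Op q (fadd x y) v = (\<lambda>m. \<Sum>w\<in>?S. fadd x y w * act q w v m)"
    "Op q (fsub x y) v = (\<lambda>m. \<Sum>w\<in>?S. fsub x y w * act q w v m)"
    by (rule Op_superset[OF fin], auto simp: fadd_def fsub_def)+
  ultimately show "Op q (fadd x y) v = (\<lambda>m. Op q x v m + Op q y v m)"
    "Op q (fsub x y) v = (\<lambda>m. Op q x v m - Op q y v m)"
    by (simp_all add: fadd_def fsub_def distrib_right left_diff_distrib sum.distrib sum_subtractf)
qed

lemma Op_fsc: "Op q (fsc c x) v = (\<lambda>m. c * Op q x v m)"
proof (cases "c = 0")
  case False
  then have "{w. fsc c x w \<noteq> 0} = {w. x w \<noteq> 0}" by (auto simp: fsc_def)
  then show ?thesis by (simp add: Op_def fsc_def sum_distrib_left mult.assoc)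
qed (simp add: Op_def fsc_def)

lemma Op_fzero: "Op q fzero v = (\<lambda>m. 0)" by (simp add: Op_def fzero_def)

lemma Op_fone: "Op q fone v = v"
  using Op_superset[of "{[]}" fone q v] by (simp add: fone_def)

lemma Op_fgen: "Op q (fgen g) = opg q g"
  using Op_superset[of "{[g]}" "fgen g" q] by (simp add: fgen_def fun_eq_iff)

lemma Op_zero_vec: "Op q x (\<lambda>m. 0) = (\<lambda>m. 0)"
  using act_sum[where I = "{}"] by (simp add: Op_def)

lemma sum_fmul:
  fixes h :: "gen list \<Rightarrow> complex"
  assumes x: "x \<in> FA" and y: "y \<in> FA"
  defines "Sx \<equiv> {w. x w \<noteq> 0}" and "Sy \<equiv> {w. y w \<noteq> 0}"
  defines "S \<equiv> (\<lambda>(u, w). u @ w) ` (Sx \<times> Sy)"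
  shows "(\<Sum>z\<in>S. fmul x y z * h z) = (\<Sum>u\<in>Sx. \<Sum>w\<in>Sy. x u * y w * h (u @ w))"
proof -
  have fin: "finite Sx" "finite Sy" "finite S"
    using x y by (simp_all add: S_def Sx_def Sy_def FA_finite_support)
  define g where "g = (\<lambda>(u, w). x u * y w * h (u @ w))"
  define split where "split = (\<lambda>(z, i). (take i z, drop i z :: gen list))"
  let ?Sig = "Sigma S (\<lambda>z. {..length z})"
  have inj: "inj_on split ?Sig"
    by (rule inj_onI) (auto simp: split_def, metis append_take_drop_id, metis length_take min.absorb2)
  have cover: "Sx \<times> Sy \<subseteq> split ` ?Sig"
  proof
    fix p assume "p \<in> Sx \<times> Sy"
    then show "p \<in> split ` ?Sig"
      by (intro image_eqI[of _ _ "(fst p @ snd p, length (fst p))"]) (auto simp: split_def S_def)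
  qed
  have "(\<Sum>z\<in>S. fmul x y z * h z) = (\<Sum>z\<in>S. \<Sum>i\<le>length z. g (split (z, i)))"
    by (simp add: fmul_def g_def split_def sum_distrib_right)
  also have "\<dots> = (\<Sum>(z, i)\<in>?Sig. g (split (z, i)))"
    by (rule sum.Sigma) (simp_all add: fin)
  also have "\<dots> = (\<Sum>p\<in>split ` ?Sig. g p)"
    by (simp add: sum.reindex[OF inj] case_prod_beta')
  also have "\<dots> = (\<Sum>p\<in>Sx \<times> Sy. g p)"
    using fin by (intro sum.mono_neutral_right[OF _ cover]) (auto simp: g_def Sx_def Sy_def)
  also have "\<dots> = (\<Sum>u\<in>Sx. \<Sum>w\<in>Sy. x u * y w * h (u @ w))"
    by (simp add: sum.cartesian_product g_def)
  finally show ?thesis .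
qed

lemma Op_fmul: "x \<in> FA \<Longrightarrow> y \<in> FA \<Longrightarrow> Op q (fmul x y) v = Op q x (Op q y v)"
proof (rule ext)
  fix m assume x: "x \<in> FA" and y: "y \<in> FA"
  let ?S = "(\<lambda>(u, w). u @ w) ` ({w. x w \<noteq> 0} \<times> {w. y w \<noteq> 0})"
  have "Op q (fmul x y) v m = (\<Sum>z\<in>?S. fmul x y z * act q z v m)"
    using x y by (simp add: Op_superset[OF _ fmul_support] FA_finite_support)
  also have "\<dots> = Op q x (Op q y v) m"
    by (simp add: sum_fmul[OF x y] Op_def act_sum act_append sum_distrib_left mult.assoc)
  finally show "Op q (fmul x y) v m = Op q x (Op q y v) m" .
qed


lemma Op_ideal:
  assumes rel: "\<And>r v. r \<in> rels q \<Longrightarrow> Op q r v = (\<lambda>m. 0)"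
  shows "x \<in> ideal_gen (rels q) \<Longrightarrow> Op q x v = (\<lambda>m. 0)"
proof (induct x arbitrary: v rule: ideal_gen.induct)
  case (gen r a b)
  then show ?case by (simp add: rels_FA Op_fmul rel Op_zero_vec)
next
  case (add x y)
  then have "x \<in> FA" "y \<in> FA" by (auto intro: ideal_gen_FA rels_FA)
  then show ?case using add by (simp add: Op_fadd)
qed (simp_all add: Op_fzero Op_fsc)

lemma pz_p1: "q \<noteq> 0 \<Longrightarrow> pz q (z + 1) = q^2 * pz q z"
  and pz_m1: "q \<noteq> 0 \<Longrightarrow> pz q (z - 1) = pz q z / q^2"
  and pz_m2: "q \<noteq> 0 \<Longrightarrow> pz q (z - 2) = pz q z / q^2 / q^2"
  and pz_p2: "q \<noteq> 0 \<Longrightarrow> pz q (z + 2) = q^2 * (q^2 * pz q z)"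
  and pz_nz: "q \<noteq> 0 \<Longrightarrow> pz q z \<noteq> 0"
  unfolding pz_def
  by (simp_all add: distrib_left right_diff_distrib power_int_add power_int_diff power_int_numeral
      field_simps)

lemma alpha_Suc: "q \<noteq> 0 \<Longrightarrow> alpha q (Suc j) = sq q + alpha q j / q^2"
  and beta_Suc: "q \<noteq> 0 \<Longrightarrow> beta q (Suc j) = sq q + q^2 * beta q j"
  and alpha_0: "alpha q 0 = 0" and beta_0: "beta q 0 = 0"
proof -
  assume q: "q \<noteq> 0"
  have down: "q powi (- 2 * int (Suc a)) = q powi (- 2 * int a) / q^2" for a
  proof -
    have "q powi (- 2 * int (Suc a)) = q powi (- 2 * int a) * q powi (- 2)"
      using q by (simp add: power_int_add[symmetric] algebra_simps)
    then show ?thesis by (simp add: power_int_minus divide_inverse)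
  qed
  have up: "q powi (2 * int (Suc a)) = q^2 * q powi (2 * int a)" for a
    using q by (simp add: algebra_simps power_int_add power_int_numeral)
  show "alpha q (Suc j) = sq q + alpha q j / q^2"
    unfolding alpha_def sum.lessThan_Suc_shift down by (simp add: sum_divide_distrib[symmetric] distrib_left)
  show "beta q (Suc j) = sq q + q^2 * beta q j"
    unfolding beta_def sum.lessThan_Suc_shift up by (simp add: sum_distrib_left algebra_simps)
qed (simp_all add: alpha_def beta_def)

lemma zero_vecI: "(\<And>b z j k. f (b, z, j, k) = (0::complex)) \<Longrightarrow> f = (\<lambda>m. 0)"
  by (auto simp: fun_eq_iff)

(* Every defining relation acts as zero; this is where q \<noteq> 0 is needed. *)
lemma Op_rels: "q \<noteq> 0 \<Longrightarrow> r \<in> rels q \<Longrightarrow> Op q r v = (\<lambda>m. 0)"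
  unfolding rels_def
  by (auto intro!: zero_vecI simp: Op_fsub Op_fadd Op_fsc Op_fmul Op_fone Op_fgen shift_def
      sq_def[symmetric])
    (simp_all add: pz_p1 pz_m1 pz_m2 pz_p2 pz_nz alpha_Suc beta_Suc alpha_0 beta_0 field_simps)


lemma eqU_Op: "q \<noteq> 0 \<Longrightarrow> eqU q x y \<Longrightarrow> x \<in> FA \<Longrightarrow> y \<in> FA \<Longrightarrow> Op q x v = Op q y v"
proof -
  assume q: "q \<noteq> 0" and e: "eqU q x y" and x: "x \<in> FA" and y: "y \<in> FA"
  have "Op q (fsub x y) v = (\<lambda>m. 0)"
    using e Op_ideal[OF Op_rels[OF q]] by (simp add: eqU_def)
  then show ?thesis using x y by (simp add: Op_fsub fun_eq_iff)
qed

lemma Op_fpow: "x \<in> FA \<Longrightarrow> Op q (fpow x n) v = (Op q x ^^ n) v"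
  by (induct n arbitrary: v) (simp_all add: Op_fone Op_fmul)

lemma shift_power: "(shift s d ^^ n) v = (\<lambda>(b, z, j, k).
    if n = 0 then v (b, z, j, k) else if b = s then v (b, z - int n * d, j, k) else 0)"
  by (induct n) (auto simp: shift_def fun_eq_iff algebra_simps)

definition delta :: "idx \<Rightarrow> vec" where "delta m = (\<lambda>m'. if m' = m then 1 else 0)"

(* The vector on which the normal words produce the standard basis vectors. *)
definition e0 :: vec where "e0 = (\<lambda>(b, z, j, k). if z = 0 \<and> j = 0 \<and> k = 0 then 1 else 0)"

lemma Fpow_e0: "(opg q GF ^^ k) e0 = (\<lambda>(b, z, j', k'). if z = 0 \<and> j' = 0 \<and> k' = k then 1 else 0)"
  by (induct k) (auto simp: e0_def fun_eq_iff pz_def)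

lemma Epow_Fpow_e0: "(opg q GE ^^ j) ((opg q GF ^^ k) e0)
    = (\<lambda>(b, z, j', k'). if z = 0 \<and> j' = j \<and> k' = k then 1 else 0)"
  unfolding Fpow_e0 by (induct j) (auto simp: fun_eq_iff pz_def)

lemma Op_nword: "Op q (nword m) e0 = delta m"
proof -
  have gens: "Op q gK = shift True 1" "Op q gKb = shift True (-1)" "Op q gL = shift False 1"
    "Op q gLb = shift False (-1)" "Op q gE = opg q GE" "Op q gF = opg q GF"
    by (simp_all add: Op_fgen fun_eq_iff)
  obtain b z j k where m: "m = (b, z, j, k)" by (cases m)
  show ?thesis
    by (cases "0 \<le> z") (auto simp: m nword_def fam_of_def fam_def Pe_def Qe_def Op_fmul Op_fpow
        gens Epow_Fpow_e0 shift_power delta_def shift_def fun_eq_iff)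
qed

lemma nword_independent:
  assumes q: "q \<noteq> 0" and fin: "finite J" and inj: "inj_on \<mu> J"
    and e: "eqU q (lincomb c (\<lambda>j. nword (\<mu> j)) J) fzero" and j0: "j0 \<in> J"
  shows "c j0 = 0"
proof -
  have "Op q (lincomb c (\<lambda>j. nword (\<mu> j)) J) e0 = (\<lambda>m. \<Sum>j\<in>J. c j * delta (\<mu> j) m)"
    using fin by (induct J rule: finite_induct)
      (simp_all add: lincomb_empty lincomb_insert Op_fzero Op_fadd Op_fsc Op_nword)
  then have "(\<lambda>m. \<Sum>j\<in>J. c j * delta (\<mu> j) m) = Op q (lincomb c (\<lambda>j. nword (\<mu> j)) J) e0" ..
  also have "\<dots> = Op q fzero e0"
    using e by (rule eqU_Op[OF q]) (simp_all add: fin)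
  finally have "(\<Sum>j\<in>J. c j * delta (\<mu> j) (\<mu> j0)) = 0"
    unfolding Op_fzero by (rule fun_cong)
  moreover have "(\<Sum>j\<in>J. c j * delta (\<mu> j) (\<mu> j0)) = c j0"
    using fin j0 inj by (simp add: delta_def inj_on_eq_iff if_distrib cong: if_cong)
  ultimately show ?thesis by simp
qed

section \<open>The four corners\<close>

(* Multiplying P_b T^z E^j F^k on the right by P_c keeps it iff c is the sheet reached
   after the j + k sheet swaps performed by E and F. *)
definition right_sheet :: "idx \<Rightarrow> bool" where
  "right_sheet m = (case m of (b, z, j, k) \<Rightarrow> if even (j + k) then b else \<not> b)"

lemma swap_power_prj:
  assumes "\<And>c. x * prj c = prj (\<not> c) * x"
  shows "x ^ n * prj c = prj (if even n then c else \<not> c) * x ^ n"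
proof (induct n arbitrary: c)
  case (Suc n)
  have "x ^ Suc n * prj c = x * (x ^ n * prj c)" by (simp add: mult.assoc)
  then show ?case by (simp add: Suc mult.assoc[symmetric] assms)
qed simp

lemma W_prj: "W m * prj c = (if right_sheet m = c then W m else 0)"
proof -
  obtain b z j k where m: "m = (b, z, j, k)" by (cases m)
  let ?c1 = "if even k then c else \<not> c"
  let ?c2 = "if even j then ?c1 else \<not> ?c1"
  have "W m * prj c = prj b * Tpow z * uE ^ j * (uF ^ k * prj c)" by (simp add: m W_def mult.assoc)
  also have "\<dots> = prj b * Tpow z * (uE ^ j * prj ?c1) * uF ^ k"
    by (simp add: swap_power_prj[OF F_prj] mult.assoc)
  also have "\<dots> = prj b * (Tpow z * prj ?c2) * uE ^ j * uF ^ k"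
    by (simp add: swap_power_prj[OF E_prj] mult.assoc)
  also have "\<dots> = (prj b * prj ?c2) * Tpow z * uE ^ j * uF ^ k"
    by (simp add: prj_Tpow[symmetric] mult.assoc)
  also have "\<dots> = (if right_sheet m = c then W m else 0)"
    by (auto simp: prj_prj m right_sheet_def W_def)
  finally show ?thesis .
qed

lemma corner_sum: "finite S \<Longrightarrow> prj a * (\<Sum>m\<in>S. Sc (f m) * W m) * prj c
   = (\<Sum>m\<in>{m\<in>S. fst m = a \<and> right_sheet m = c}. Sc (f m) * W m)"
proof -
  assume S: "finite S"
  have "prj a * (\<Sum>m\<in>S. Sc (f m) * W m) * prj c = (\<Sum>m\<in>S. Sc (f m) * (prj a * W m * prj c))"
    by (simp add: sum_distrib_left sum_distrib_right Sc_left mult.assoc)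
  also have "\<dots> = (\<Sum>m\<in>S. if fst m = a \<and> right_sheet m = c then Sc (f m) * W m else 0)"
    by (rule sum.cong) (auto simp: prj_W W_prj)
  finally show ?thesis using S by (simp add: sum.inter_filter)
qed

definition sheet_idem :: "bool \<Rightarrow> fa" where "sheet_idem a = (if a then Pe else Qe)"

lemma sheet_idem_FA[simp]: "sheet_idem a \<in> FA" by (simp add: sheet_idem_def)
lemma abs_sheet_idem: "abs_gU (\<lambda>q. sheet_idem a) = prj a"
  by (simp add: sheet_idem_def abs_Pe abs_Qe)

definition fam_index :: "bool \<Rightarrow> (nat \<times> nat \<times> nat) + (nat \<times> nat \<times> nat) \<Rightarrow> idx" where
  "fam_index b x = (case x of Inl (i, j, k) \<Rightarrow> (b, int i, j, k) | Inr (i, j, k) \<Rightarrow> (b, - int i, j, k))"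

lemma nword_fam_index: "x \<in> famidx ev \<Longrightarrow> nword (fam_index a x) = fam_of a x"
  by (auto simp: famidx_def fam_index_def nword_def)

lemma fst_fam_index: "fst (fam_index a x) = a"
  by (simp add: fam_index_def split: sum.split prod.split)

lemma fam_index_inj: "inj_on (fam_index a) (famidx ev)"
  by (rule inj_onI) (auto simp: famidx_def fam_index_def)

lemma fam_index_image:
  "fam_index a ` famidx ev = {m. fst m = a \<and> even (fst (snd (snd m)) + snd (snd (snd m))) = ev}"
proof (intro set_eqI iffI)
  fix m :: idx
  obtain b z j k where m: "m = (b, z, j, k)" by (cases m)
  let ?x = "if 0 \<le> z then Inl (nat z, j, k) else Inr (nat (- z), j, k)"
  assume "m \<in> {m. fst m = a \<and> even (fst (snd (snd m)) + snd (snd (snd m))) = ev}"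
  then have "m = fam_index a ?x" "?x \<in> famidx ev" by (auto simp: m fam_index_def famidx_def)
  then show "m \<in> fam_index a ` famidx ev" by blast
qed (auto simp: famidx_def fam_index_def)

lemma right_sheet_fam_index: "x \<in> famidx ev \<Longrightarrow> right_sheet (fam_index a x) = (ev = a)"
  by (auto simp: famidx_def fam_index_def right_sheet_def)


lemma basisU_normal_words:
  assumes q: "q \<noteq> 0" and inj: "inj_on \<mu> J"
    and fam: "\<And>j. j \<in> J \<Longrightarrow> b j = nword (\<mu> j) \<and> inU q S (b j)"
    and span: "\<And>x. x \<in> FA \<Longrightarrow> inU q S x \<Longrightarrow>
      \<exists>M c. finite M \<and> M \<subseteq> \<mu> ` J \<and> eqU q x (lincomb c nword M)"
  shows "basisU q S J b"
  unfolding basisU_def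
proof (intro conjI ballI allI impI)
  fix j assume "j \<in> J"
  then show "b j \<in> FA" "inU q S (b j)" by (metis fam nword_FA)+
next
  fix x assume "x \<in> FA" "inU q S x"
  then obtain M c where M: "finite M" "M \<subseteq> \<mu> ` J" and x: "eqU q x (lincomb c nword M)"
    using span by blast
  let ?\<iota> = "inv_into J \<mu>"
  have \<iota>: "?\<iota> m \<in> J" "\<mu> (?\<iota> m) = m" if "m \<in> M" for m
    using M(2) that by (auto intro: inv_into_into f_inv_into_f)
  have "lincomb (\<lambda>j. c (\<mu> j)) b (?\<iota> ` M) = lincomb c nword M"
    unfolding lincomb_def
    by (subst sum.reindex[OF inj_on_inv_into[OF M(2)]]) (auto simp: \<iota> fam)
  then show "\<exists>J' c. J' \<subseteq> J \<and> finite J' \<and> eqU q x (lincomb c b J')"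
    using x M(1) \<iota>(1) by (intro exI[of _ "?\<iota> ` M"] exI[of _ "\<lambda>j. c (\<mu> j)"]) auto
next
  fix J' c j assume H: "J' \<subseteq> J \<and> finite J' \<and> eqU q (lincomb c b J') fzero" and j: "j \<in> J'"
  have "lincomb c b J' = lincomb c (\<lambda>j. nword (\<mu> j)) J'"
    unfolding lincomb_def by (intro ext sum.cong) (use H fam in auto)
  then show "c j = 0"
    using H j by (intro nword_independent[OF q _ inj_on_subset[OF inj]]) auto
qed

lemma eqU_normal_form:
  assumes q: "q \<noteq> 0" and x: "x \<in> FA" and M: "finite M"
    and eq: "abs_gU (\<lambda>q. x) = (\<Sum>m\<in>M. Sc (f m) * W m)"
  shows "eqU q x (lincomb (\<lambda>m. f m q) nword M)"
proof -
  have "abs_gU (\<lambda>q. x) = abs_gU (\<lambda>q. lincomb (\<lambda>m. f m q) nword M)"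
    using M by (simp add: eq abs_lincomb abs_nword)
  then show ?thesis using gU_eqD[of "\<lambda>q. x" "\<lambda>q. lincomb (\<lambda>m. f m q) nword M"] q x M by simp
qed

lemma corner_basis:
  assumes q: "q \<noteq> 0" and c: "c = (ev = a)"
  shows "basisU q (sandwich (sheet_idem a) (sheet_idem c)) (famidx ev) (fam_of a)"
proof (rule basisU_normal_words[OF q fam_index_inj])
  fix x assume x: "x \<in> famidx ev"
  have "abs_gU (\<lambda>q. fmul3 (sheet_idem a) (fam_of a x) (sheet_idem c)) = prj a * W (fam_index a x) * prj c"
    by (simp add: abs_const_mul abs_sheet_idem abs_nword flip: nword_fam_index[OF x])
  also have "\<dots> = W (fam_index a x)"
    using c by (simp add: prj_W W_prj right_sheet_fam_index[OF x] fst_fam_index)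
  finally have "eqU q (fam_of a x) (fmul3 (sheet_idem a) (fam_of a x) (sheet_idem c))"
    using q by (intro gU_const_eqD) (simp_all add: abs_nword flip: nword_fam_index[OF x])
  moreover have "fmul3 (sheet_idem a) (fam_of a x) (sheet_idem c) \<in> sandwich (sheet_idem a) (sheet_idem c)"
    by (auto simp: sandwich_def)
  ultimately show "fam_of a x = nword (fam_index a x) \<and> inU q (sandwich (sheet_idem a) (sheet_idem c)) (fam_of a x)"
    by (auto simp: nword_fam_index[OF x] inU_def)
next
  fix x assume "x \<in> FA" "inU q (sandwich (sheet_idem a) (sheet_idem c)) x"
  then obtain u where u: "u \<in> FA" and xu: "eqU q x (fmul3 (sheet_idem a) u (sheet_idem c))"
    unfolding inU_def sandwich_def by blast
  obtain S f where S: "finite S" and uS: "abs_gU (\<lambda>q. u) = (\<Sum>m\<in>S. Sc (f m) * W m)"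
    using FA_normal_form[OF u] by blast
  let ?M = "{m\<in>S. fst m = a \<and> right_sheet m = c}"
  have "abs_gU (\<lambda>q. fmul3 (sheet_idem a) u (sheet_idem c)) = (\<Sum>m\<in>?M. Sc (f m) * W m)"
    using u S by (simp add: abs_const_mul abs_sheet_idem uS corner_sum)
  then have "eqU q x (lincomb (\<lambda>m. f m q) nword ?M)"
    using q u S by (intro eqU_trans[OF xu] eqU_normal_form) simp_all
  moreover have "?M \<subseteq> fam_index a ` famidx ev"
    using c by (auto simp: fam_index_image right_sheet_def split: if_splits)
  ultimately show "\<exists>M c. finite M \<and> M \<subseteq> fam_index a ` famidx ev \<and> eqU q x (lincomb c nword M)"
    using S by (intro exI[of _ ?M]) auto
qed


definition pierce_idx :: "(nat \<times> ((nat \<times> nat \<times> nat) + (nat \<times> nat \<times> nat))) set" where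
  "pierce_idx = {(0::nat, x) | x. x \<in> famidx True} \<union> {(1, x) | x. x \<in> famidx False} \<union>
        {(2, x) | x. x \<in> famidx False} \<union> {(3, x) | x. x \<in> famidx True}"

definition pierce_index :: "nat \<times> ((nat \<times> nat \<times> nat) + (nat \<times> nat \<times> nat)) \<Rightarrow> idx" where
  "pierce_index = (\<lambda>(n, x). fam_index (n \<le> 1) x)"

lemma pierce_idx_iff: "(n, x) \<in> pierce_idx \<longleftrightarrow> n \<le> 3 \<and> x \<in> famidx (n = 0 \<or> n = 3)"
proof -
  have "n \<le> 3 \<longleftrightarrow> n = 0 \<or> n = 1 \<or> n = 2 \<or> n = 3" by arith
  then show ?thesis unfolding pierce_idx_def by auto
qed

lemma famidx_parity:
  "x \<in> famidx ev \<Longrightarrow> even (fst (snd (snd (fam_index a x))) + snd (snd (snd (fam_index a x)))) = ev"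
  by (auto simp: famidx_def fam_index_def)

lemma pierce_index_bij: "bij_betw pierce_index pierce_idx UNIV"
proof (rule bij_betwI')
  fix p p' assume "p \<in> pierce_idx" "p' \<in> pierce_idx"
  moreover obtain n x n' x' where p: "p = (n, x)" "p' = (n', x')" by (cases p, cases p')
  ultimately have x: "x \<in> famidx (n = 0 \<or> n = 3)" "x' \<in> famidx (n' = 0 \<or> n' = 3)"
    and n: "n \<le> 3" "n' \<le> 3" by (auto simp: pierce_idx_iff)
  show "pierce_index p = pierce_index p' \<longleftrightarrow> p = p'"
  proof
    assume e: "pierce_index p = pierce_index p'"
    then have "(n \<le> 1) = (n' \<le> 1)" using fst_fam_index by (metis p pierce_index_def case_prod_conv)
    moreover have "(n = 0 \<or> n = 3) = (n' = 0 \<or> n' = 3)"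
    proof -
      have e': "fam_index (n \<le> 1) x = fam_index (n' \<le> 1) x'" using e by (simp add: p pierce_index_def)
      show ?thesis using famidx_parity[OF x(1), of "n \<le> 1"] famidx_parity[OF x(2), of "n' \<le> 1"]
        unfolding e' by metis
    qed
    ultimately have "n = n'" using n by auto
    then show "p = p'" using e x fam_index_inj by (auto simp: p pierce_index_def dest: inj_onD)
  qed simp
next
  fix m :: idx
  obtain b z j k where m: "m = (b, z, j, k)" by (cases m)
  let ?ev = "even (j + k)" and ?n = "if b then (if even (j + k) then 0 else 1) else (if even (j + k) then 3 else 2) :: nat"
  have "m \<in> fam_index b ` famidx ?ev" unfolding fam_index_image by (simp add: m)
  then obtain x where "x \<in> famidx ?ev" "m = fam_index b x" by blast
  then show "\<exists>p\<in>pierce_idx. m = pierce_index p"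
    by (intro bexI[of _ "(?n, x)"]) (auto simp: pierce_idx_iff pierce_index_def)
qed simp

lemma inU_FA: "y \<in> FA \<Longrightarrow> inU q FA y"
  unfolding inU_def by (blast intro: eqU_refl)

lemma global_basis:
  assumes q: "q \<noteq> 0"
  shows "basisU q FA pierce_idx (\<lambda>(n, x). if n \<le> 1 then fam Pe gK gKb x else fam Qe gL gLb x)"
proof (rule basisU_normal_words[OF q bij_betw_imp_inj_on[OF pierce_index_bij]])
  fix p assume "p \<in> pierce_idx"
  then show "(case p of (n, x) \<Rightarrow> if n \<le> 1 then fam Pe gK gKb x else fam Qe gL gLb x)
      = nword (pierce_index p) \<and> inU q FA (case p of (n, x) \<Rightarrow> if n \<le> 1 then fam Pe gK gKb x else fam Qe gL gLb x)"
    by (cases p) (auto simp: pierce_idx_iff pierce_index_def nword_fam_index fam_of_def inU_FA)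
next
  fix x assume "x \<in> FA"
  then obtain S f where "finite S" "abs_gU (\<lambda>q. x) = (\<Sum>m\<in>S. Sc (f m) * W m)"
    using FA_normal_form by blast
  then show "\<exists>M c. finite M \<and> M \<subseteq> pierce_index ` pierce_idx \<and> eqU q x (lincomb c nword M)"
    using q \<open>x \<in> FA\<close> pierce_index_bij by (auto simp: bij_betw_def intro!: eqU_normal_form)
qed

(* x = PxP + PxQ + QxP + QxQ, since P + Q = 1. *)
lemma pierce_spanning:
  assumes q: "q \<noteq> 0"
  shows "\<forall>x\<in>FA. \<exists>a\<in>sandwich Pe Pe. \<exists>b\<in>sandwich Pe Qe. \<exists>c\<in>sandwich Qe Pe. \<exists>d\<in>sandwich Qe Qe.
    eqU q x (fadd (fadd a b) (fadd c d))"
proof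
  fix x assume x: "x \<in> FA"
  let ?X = "abs_gU (\<lambda>q. x)"
  have "abs_gU (\<lambda>q. fadd (fadd (fmul3 Pe x Pe) (fmul3 Pe x Qe)) (fadd (fmul3 Qe x Pe) (fmul3 Qe x Qe)))
      = (prj True + prj False) * ?X * (prj True + prj False)"
    using x by (simp add: abs_add abs_const_mul abs_Pe abs_Qe algebra_simps)
  also have "\<dots> = ?X" by (simp add: prj_sum)
  finally have "eqU q x (fadd (fadd (fmul3 Pe x Pe) (fmul3 Pe x Qe)) (fadd (fmul3 Qe x Pe) (fmul3 Qe x Qe)))"
    using q x by (intro gU_const_eqD) simp_all
  moreover have "fmul3 X x Y \<in> sandwich X Y" for X Y using x by (auto simp: sandwich_def)
  ultimately show "\<exists>a\<in>sandwich Pe Pe. \<exists>b\<in>sandwich Pe Qe. \<exists>c\<in>sandwich Qe Pe. \<exists>d\<in>sandwich Qe Qe.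
    eqU q x (fadd (fadd a b) (fadd c d))" by blast
qed

lemma corner_of_sum:
  fixes u :: "bool \<Rightarrow> bool \<Rightarrow> fa"
  assumes u: "\<And>a c. u a c \<in> FA"
  defines "s \<equiv> fadd (fadd (fmul3 Pe (u True True) Pe) (fmul3 Pe (u True False) Qe))
                   (fadd (fmul3 Qe (u False True) Pe) (fmul3 Qe (u False False) Qe))"
  shows "abs_gU (\<lambda>q. fmul3 (sheet_idem a) s (sheet_idem c))
       = abs_gU (\<lambda>q. fmul3 (sheet_idem a) (u a c) (sheet_idem c))"
proof -
  have cut: "prj a * (prj a' * y * prj c') * prj c = (if a = a' \<and> c = c' then prj a * y * prj c else 0)"
    for a' c' y
    by (simp add: mult.assoc[symmetric]) (simp add: mult.assoc prj_prj)
  have s: "s \<in> FA" using u by (simp add: s_def)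
  have "abs_gU (\<lambda>q. s) = prj True * abs_gU (\<lambda>q. u True True) * prj True
      + prj True * abs_gU (\<lambda>q. u True False) * prj False
      + (prj False * abs_gU (\<lambda>q. u False True) * prj True
      + prj False * abs_gU (\<lambda>q. u False False) * prj False)"
    using u by (simp add: s_def abs_add abs_const_mul abs_Pe abs_Qe)
  then show ?thesis
    using u s by (simp add: abs_const_mul abs_sheet_idem distrib_left distrib_right cut)
qed

lemma pierce_direct:
  assumes q: "q \<noteq> 0"
  shows "\<forall>a\<in>sandwich Pe Pe. \<forall>b\<in>sandwich Pe Qe. \<forall>c\<in>sandwich Qe Pe. \<forall>d\<in>sandwich Qe Qe.
    eqU q (fadd (fadd a b) (fadd c d)) fzero \<longrightarrow>
    eqU q a fzero \<and> eqU q b fzero \<and> eqU q c fzero \<and> eqU q d fzero"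
proof (intro ballI impI)
  fix a b c d
  assume "a \<in> sandwich Pe Pe" "b \<in> sandwich Pe Qe" "c \<in> sandwich Qe Pe" "d \<in> sandwich Qe Qe"
  then obtain u1 u2 u3 u4 where "u1 \<in> FA" "u2 \<in> FA" "u3 \<in> FA" "u4 \<in> FA"
    and "a = fmul3 Pe u1 Pe" "b = fmul3 Pe u2 Qe" "c = fmul3 Qe u3 Pe" "d = fmul3 Qe u4 Qe"
    unfolding sandwich_def by blast
  moreover define u where "u a' c' = (if a' then (if c' then u1 else u2) else (if c' then u3 else u4))"
    for a' c'
  ultimately have u: "\<And>a c. u a c \<in> FA"
    and abcd: "a = fmul3 Pe (u True True) Pe" "b = fmul3 Pe (u True False) Qe"
      "c = fmul3 Qe (u False True) Pe" "d = fmul3 Qe (u False False) Qe"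
    by simp_all
  let ?s = "fadd (fadd a b) (fadd c d)"
  assume "eqU q ?s fzero"
  then have "eqU q (fmul3 (sheet_idem a') ?s (sheet_idem c')) (fmul3 (sheet_idem a') fzero (sheet_idem c'))"
    for a' c' using u abcd by (intro eqU_mul) simp_all
  moreover have "eqU q (fmul3 (sheet_idem a') (u a' c') (sheet_idem c')) (fmul3 (sheet_idem a') ?s (sheet_idem c'))"
    for a' c' using q u corner_of_sum[where u = u and a = a' and c = c', OF u] abcd by (intro gU_const_eqD) simp_all
  ultimately have "eqU q (fmul3 (sheet_idem a') (u a' c') (sheet_idem c')) fzero" for a' c'
    by (metis eqU_trans fmul_fzero_left fmul_fzero_right)
  from this[of True True] this[of True False] this[of False True] this[of False False]
  show "eqU q a fzero \<and> eqU q b fzero \<and> eqU q c fzero \<and> eqU q d fzero"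
    by (simp add: abcd sheet_idem_def)
qed

theorem proposition7:
  fixes q :: complex
  assumes "q \<noteq> 0" and "q \<noteq> 1" and "q \<noteq> -1"
  shows
    "(\<forall>x\<in>FA. \<exists>a\<in>sandwich Pe Pe. \<exists>b\<in>sandwich Pe Qe. \<exists>c\<in>sandwich Qe Pe. \<exists>d\<in>sandwich Qe Qe.
        eqU q x (fadd (fadd a b) (fadd c d))) \<and>
     (\<forall>a\<in>sandwich Pe Pe. \<forall>b\<in>sandwich Pe Qe. \<forall>c\<in>sandwich Qe Pe. \<forall>d\<in>sandwich Qe Qe.
        eqU q (fadd (fadd a b) (fadd c d)) fzero \<longrightarrow>
        eqU q a fzero \<and> eqU q b fzero \<and> eqU q c fzero \<and> eqU q d fzero) \<and>
     basisU q (sandwich Pe Pe) (famidx True) (fam Pe gK gKb) \<and>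
     basisU q (sandwich Pe Qe) (famidx False) (fam Pe gK gKb) \<and>
     basisU q (sandwich Qe Pe) (famidx False) (fam Qe gL gLb) \<and>
     basisU q (sandwich Qe Qe) (famidx True) (fam Qe gL gLb) \<and>
     basisU q FA
       ({(0::nat, x) | x. x \<in> famidx True} \<union> {(1, x) | x. x \<in> famidx False} \<union>
        {(2, x) | x. x \<in> famidx False} \<union> {(3, x) | x. x \<in> famidx True})
       (\<lambda>(n, x). if n \<le> 1 then fam Pe gK gKb x else fam Qe gL gLb x)"
proof -
  have q: "q \<noteq> 0" by fact
  have corner: "basisU q (sandwich (sheet_idem a) (sheet_idem (ev = a))) (famidx ev) (fam_of a)"
    for a ev by (rule corner_basis[OF q refl])
  show ?thesis
    using pierce_spanning[OF q] pierce_direct[OF q] global_basis[OF q]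
      corner[of True True] corner[of True False] corner[of False False] corner[of False True]
    by (simp add: sheet_idem_def fam_of_def pierce_idx_def)
qed

end
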